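(* Let $(T_1,\dots,T_k)$ be a tuple of contractions on a Hilbert space $\mathcal{H}$ and $q_{ij}\in\mathbb{T}$ ($1\le i<j\le k$) such that $T_iT_j=q_{ij}T_jT_i$ and $T_iT_j^*=\overline{q_{ij}}\,T_j^*T_i$ for $1\le i<j\le k$. Let $G_{dc}$ be the group described in the context and define $T:G_{dc}\to\mathcal{B}(\mathcal{H})$ by \[ T\Big(\prod_{1\le i<j\le k}q_{ij}^{m_{ij}}s_1^{m_1}\cdots s_k^{m_k}\Big)=\prod_{1\le i<j\le k}q_{ij}^{m_{ij}}\,T_1(m_1)\cdots T_k(m_k), \] where on the right $q_{ij}^{m_{ij}}$ denotes the power of the scalar $q_{ij}$. Then $T$ is positive definite if and only if \[ S(u)=\sum_{v\subseteq u}(-1)^{|v|}T(x^{e(v)})^*T(x^{e(v)})\ge 0 \] for every subset $u$ of $\{1,\dots,k\}$.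
   Context: For a contraction $C$ and $m\in\mathbb{Z}$: $C(m)=C^m$ if $m\ge1$, $C(0)=I$, and $C(m)=(C^* )^{|m|}$ if $m<0$. The group $G_{dc}$ consists of formal elements $x^m=\prod_{1\le i<j\le k}q_{ij}^{m_{ij}}s_1^{m_1}\cdots s_k^{m_k}$ indexed by $m=(m_{ij}\,(1\le i<j\le k);\,m_1,\dots,m_k)$ with all entries in $\mathbb{Z}$, where $s_1,\dots,s_k$ and $q_{ij}$ are indeterminates subject to $s_is_j=q_{ij}s_js_i$, $s_is_j^{-1}=q_{ij}^{-1}s_j^{-1}s_i$ ($i<j$), with the $q_{ij}$ central; concretely the product is $x^mx^n=\prod_{1\le i<j\le k}q_{ij}^{-n_im_j}\,x^{m+n}$ (i.e. the $q_{ij}$-exponents add and are corrected by $-n_im_j$, the $s_l$-exponents add), the identity is $x^0$ and $(x^m)^{-1}=\prod_{i<j}q_{ij}^{-m_im_j}x^{-m}$. For $v\subseteq\{1,\dots,k\}$, $x^{e(v)}=s_1^{e_1}\cdots s_k^{e_k}$ with $e_l=1$ if $l\in v$ and $0$ otherwise (all $q_{ij}$-exponents zero); thus $T(x^{e(v)})$ is the product of the $T_l$, $l\in v$, in increasing order of $l$. A function $T:G\to\mathcal{B}(\mathcal{H})$ on a group $G$ is positive definite if $T(s^{-1})=T(s)^*$ for all $s\in G$ and $\sum_{s,t\in G}\langle T(t^{-1}s)h(s),h(t)\rangle\ge0$ for every finitely supported $h:G\to\mathcal{H}$. *)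

theory Defs
  imports "HOL-Analysis.Analysis" "HOL-Library.Complex_Order"
begin

text \<open>The inner product is linear in the first and conjugate-linear in the second argument;
the norm is the one induced by the inner product; a Hilbert space is a complete one.\<close>

class complex_inner_space = real_normed_vector +
  fixes scaleC :: "complex \<Rightarrow> 'a \<Rightarrow> 'a"
    and cinner :: "'a \<Rightarrow> 'a \<Rightarrow> complex"
  assumes scaleC_add_right: "scaleC a (x + y) = scaleC a x + scaleC a y"
    and scaleC_add_left: "scaleC (a + b) x = scaleC a x + scaleC b x"
    and scaleC_scaleC: "scaleC a (scaleC b x) = scaleC (a * b) x"
    and scaleC_one: "scaleC 1 x = x"
    and scaleR_scaleC: "scaleR r x = scaleC (complex_of_real r) x"
    and cinner_commute: "cinner x y = cnj (cinner y x)"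
    and cinner_add_left: "cinner (x + y) z = cinner x z + cinner y z"
    and cinner_scaleC_left: "cinner (scaleC c x) y = c * cinner x y"
    and cinner_self_ge_zero: "0 \<le> Re (cinner x x)"
    and cinner_self_eq_zero: "cinner x x = 0 \<longleftrightarrow> x = 0"
    and norm_eq_sqrt_cinner: "norm x = sqrt (Re (cinner x x))"

class chilbert_space = complex_inner_space + complete_space

definition clinear_op :: "('h::complex_inner_space \<Rightarrow> 'h) \<Rightarrow> bool" where
  "clinear_op A \<longleftrightarrow> (\<forall>x y. A (x + y) = A x + A y) \<and> (\<forall>c x. A (scaleC c x) = scaleC c (A x))"

definition contraction :: "('h::complex_inner_space \<Rightarrow> 'h) \<Rightarrow> bool" where
  "contraction A \<longleftrightarrow> clinear_op A \<and> (\<forall>x. norm (A x) \<le> norm x)"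

text \<open>Hilbert space adjoint (exists and is unique for bounded operators on Hilbert spaces).\<close>
definition adj :: "('h::complex_inner_space \<Rightarrow> 'h) \<Rightarrow> ('h \<Rightarrow> 'h)" where
  "adj A = (SOME B. \<forall>x y. cinner (A x) y = cinner x (B y))"

definition op_scale :: "complex \<Rightarrow> ('h::complex_inner_space \<Rightarrow> 'h) \<Rightarrow> ('h \<Rightarrow> 'h)" where
  "op_scale c A = (\<lambda>x. scaleC c (A x))"

text \<open>Positive operator: \<open>\<langle>A x, x\<rangle> \<ge> 0\<close> (complex order: real and nonnegative).\<close>
definition op_pos :: "('h::complex_inner_space \<Rightarrow> 'h) \<Rightarrow> bool" where
  "op_pos A \<longleftrightarrow> (\<forall>x. 0 \<le> cinner (A x) x)"

definition op_ipow :: "('h::complex_inner_space \<Rightarrow> 'h) \<Rightarrow> int \<Rightarrow> ('h \<Rightarrow> 'h)" where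
  "op_ipow C m = (if m \<ge> 1 then C ^^ nat m else if m = 0 then id else adj C ^^ nat (- m))"

definition op_prod :: "(nat \<Rightarrow> ('h \<Rightarrow> 'h)) \<Rightarrow> nat list \<Rightarrow> ('h \<Rightarrow> 'h)" where
  "op_prod f xs = foldr (\<lambda>i acc. f i \<circ> acc) xs id"

text \<open>An element \<open>x^m\<close> is encoded by the pair \<open>(mq, ms)\<close> with \<open>mq i j = m_ij\<close> for
\<open>1 \<le> i < j \<le> k\<close> and \<open>ms l = m_l\<close> for \<open>1 \<le> l \<le> k\<close>; all other entries are 0.\<close>
type_synonym gdc = "(nat \<Rightarrow> nat \<Rightarrow> int) \<times> (nat \<Rightarrow> int)"

definition pairs :: "nat \<Rightarrow> (nat \<times> nat) set" where
  "pairs k = {(i, j). 1 \<le> i \<and> i < j \<and> j \<le> k}"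

definition gdc_carrier :: "nat \<Rightarrow> gdc set" where
  "gdc_carrier k = {(mq, ms). (\<forall>i j. (i, j) \<notin> pairs k \<longrightarrow> mq i j = 0) \<and>
                               (\<forall>l. l \<notin> {1..k} \<longrightarrow> ms l = 0)}"

text \<open>\<open>x^m x^n = \<Prod> q_ij^{-n_i m_j} x^{m+n}\<close>.\<close>
definition gdc_mult :: "nat \<Rightarrow> gdc \<Rightarrow> gdc \<Rightarrow> gdc" where
  "gdc_mult k x y = (\<lambda>i j. fst x i j + fst y i j - (if (i, j) \<in> pairs k then snd y i * snd x j else 0),
                     \<lambda>l. snd x l + snd y l)"

definition gdc_one :: gdc where
  "gdc_one = (\<lambda>i j. 0, \<lambda>l. 0)"

text \<open>\<open>(x^m)^{-1} = \<Prod> q_ij^{-m_i m_j} x^{-m}\<close>.\<close>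
definition gdc_inv :: "nat \<Rightarrow> gdc \<Rightarrow> gdc" where
  "gdc_inv k x = (\<lambda>i j. - fst x i j - (if (i, j) \<in> pairs k then snd x i * snd x j else 0),
                  \<lambda>l. - snd x l)"

definition gdc_e :: "nat set \<Rightarrow> gdc" where
  "gdc_e v = (\<lambda>i j. 0, \<lambda>l. if l \<in> v then 1 else 0)"

definition positive_definite ::
  "'g set \<Rightarrow> ('g \<Rightarrow> 'g \<Rightarrow> 'g) \<Rightarrow> ('g \<Rightarrow> 'g) \<Rightarrow> ('g \<Rightarrow> ('h::complex_inner_space \<Rightarrow> 'h)) \<Rightarrow> bool" where
  "positive_definite G gmult ginv T \<longleftrightarrow>
     (\<forall>s\<in>G. T (ginv s) = adj (T s)) \<and>
     (\<forall>F h. finite F \<longrightarrow> F \<subseteq> G \<longrightarrow>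
        0 \<le> (\<Sum>s\<in>F. \<Sum>t\<in>F. cinner (T (gmult (ginv t) s) (h s)) (h t)))"

definition Tdc :: "nat \<Rightarrow> (nat \<Rightarrow> nat \<Rightarrow> complex) \<Rightarrow> (nat \<Rightarrow> ('h::complex_inner_space \<Rightarrow> 'h))
                   \<Rightarrow> gdc \<Rightarrow> ('h \<Rightarrow> 'h)" where
  "Tdc k q Ts x = op_scale (\<Prod>(i, j)\<in>pairs k. q i j powi fst x i j)
                     (op_prod (\<lambda>l. op_ipow (Ts l) (snd x l)) [1..<k+1])"

definition Sop :: "nat \<Rightarrow> (nat \<Rightarrow> nat \<Rightarrow> complex) \<Rightarrow> (nat \<Rightarrow> ('h::complex_inner_space \<Rightarrow> 'h))
                   \<Rightarrow> nat set \<Rightarrow> ('h \<Rightarrow> 'h)" where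
  "Sop k q Ts u = (\<lambda>x. \<Sum>v\<in>Pow u. scaleC ((-1) ^ card v)
                         (adj (Tdc k q Ts (gdc_e v)) (Tdc k q Ts (gdc_e v) x)))"

end

theory Submission
  imports Defs "HOL-Library.Function_Algebras"
begin

text \<open>Both sides of the equivalence hold for every doubly \<open>q\<close>-commuting tuple of contractions.
  Moving \<open>T\<^sub>i\<close> and \<open>T\<^sub>i\<^sup>*\<close> past \<open>T\<^sub>j\<close> and \<open>T\<^sub>j\<^sup>*\<close> (\<open>i \<noteq> j\<close>) only produces unimodular scalars, which
  cancel in \<open>T\<^sub>i\<^sup>*T\<^sub>i\<close>.  Hence \<open>S(u)\<close> is the product of the commuting defects
  \<open>I - T\<^sub>i\<^sup>*T\<^sub>i\<close>, \<open>i \<in> u\<close>, which is positive by F. Riesz's theorem on products of commuting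
  positive operators.

  For positive definiteness, the kernel \<open>T(t\<^sup>-\<^sup>1s)\<close> is, after absorbing unimodular factors into
  the vectors, of the form \<open>K\<^sub>k(I)\<close> for kernels \<open>K\<^sub>m(P)\<close> built from the first \<open>m\<close> variables and a
  positive operator \<open>P\<close> commuting with them.  Grouping the entries by the exponent of \<open>s\<^sub>m\<^sub>+\<^sub>1\<close>
  turns \<open>K\<^sub>m\<^sub>+\<^sub>1(P)\<close> into a Toeplitz kernel over \<open>K\<^sub>m(P)\<close> for the contraction \<open>T\<^sub>m\<^sub>+\<^sub>1\<close>, whose
  positivity reduces, by the telescoping argument behind Sz.-Nagy's dilation theorem, to that of
  \<open>K\<^sub>m(P)\<close> and \<open>K\<^sub>m(P (I - T\<^sub>m\<^sub>+\<^sub>1\<^sup>*T\<^sub>m\<^sub>+\<^sub>1))\<close>; induction on \<open>m\<close> finishes the proof.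
  Adjoints exist by the Riesz representation theorem, proved via nearest points.\<close>

lemma cinner_add_right: "cinner x (y + z) = cinner x y + cinner x z"
  by (metis cinner_add_left cinner_commute complex_cnj_add)

lemma cinner_scaleC_right: "cinner x (scaleC c y) = cnj c * cinner x y"
  by (metis cinner_commute cinner_scaleC_left complex_cnj_mult complex_cnj_cnj)

lemma cinner_zero_left [simp]: "cinner 0 y = 0"
  using cinner_add_left[of 0 0 y] by simp

lemma cinner_zero_right [simp]: "cinner x 0 = 0"
  using cinner_add_right[of x 0 0] by simp

lemma cinner_minus_left: "cinner (- x) y = - cinner x y"
  using cinner_add_left[of "-x" x y] by (simp add: eq_neg_iff_add_eq_0)

lemma cinner_minus_right: "cinner x (- y) = - cinner x y"
  using cinner_add_right[of x "-y" y] by (simp add: eq_neg_iff_add_eq_0)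

lemma cinner_diff_left: "cinner (x - y) z = cinner x z - cinner y z"
  using cinner_add_left[of x "-y" z] cinner_minus_left[of y z] by simp

lemma cinner_diff_right: "cinner x (y - z) = cinner x y - cinner x z"
  using cinner_add_right[of x y "-z"] cinner_minus_right[of x z] by simp

lemma cinner_sum_left: "cinner (\<Sum>i\<in>I. f i) y = (\<Sum>i\<in>I. cinner (f i) y)"
  by (induction I rule: infinite_finite_induct) (auto simp: cinner_add_left)

lemma cinner_sum_right: "cinner x (\<Sum>i\<in>I. f i) = (\<Sum>i\<in>I. cinner x (f i))"
  by (induction I rule: infinite_finite_induct) (auto simp: cinner_add_right)

lemma scaleC_zero_right [simp]: "scaleC c 0 = 0"
  using scaleC_add_right[of c 0 0] by simp

lemma scaleC_zero_left [simp]: "scaleC 0 x = 0"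
  using scaleC_add_left[of 0 0 x] by simp

lemma scaleC_minus_right: "scaleC c (- x) = - scaleC c x"
  using scaleC_add_right[of c "-x" x] by (simp add: eq_neg_iff_add_eq_0)

lemma scaleC_diff_right: "scaleC c (x - y) = scaleC c x - scaleC c y"
  using scaleC_add_right[of c x "-y"] scaleC_minus_right[of c y] by simp

lemma scaleC_minus_left: "scaleC (- c) x = - scaleC c x"
  using scaleC_add_left[of "-c" c x] by (simp add: eq_neg_iff_add_eq_0)

lemma scaleC_minus1_left: "scaleC (-1) x = - x"
  using scaleR_scaleC[of "-1" x] by simp

lemma cinner_self: "cinner x x = complex_of_real ((norm x)\<^sup>2)"
proof -
  have "Im (cinner x x) = 0"
    using arg_cong[OF cinner_commute[of x x], of Im] by simp
  moreover have "Re (cinner x x) = (norm x)\<^sup>2"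
    using norm_eq_sqrt_cinner[of x] cinner_self_ge_zero[of x] by simp
  ultimately show ?thesis by (simp add: complex_eq_iff)
qed

lemma power2_norm_eq_cinner: "(norm x)\<^sup>2 = Re (cinner x x)"
  by (simp add: cinner_self)

lemma cinner_self_nonneg: "0 \<le> cinner x x"
  by (simp add: cinner_self less_eq_complex_def)

lemma norm_scaleC: "norm (scaleC c x) = cmod c * norm x"
proof -
  have "cinner (scaleC c x) (scaleC c x) = c * cnj c * cinner x x"
    by (simp add: cinner_scaleC_left cinner_scaleC_right)
  also have "\<dots> = complex_of_real ((cmod c * norm x)\<^sup>2)"
    by (simp add: complex_norm_square[symmetric] cinner_self power_mult_distrib)
  finally show ?thesis
    by (simp add: norm_eq_sqrt_cinner[of "scaleC c x"])
qed

lemma cinner_left_ext: "(\<And>z. cinner x z = cinner y z) \<Longrightarrow> x = y"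
  by (metis cinner_diff_left cinner_self_eq_zero right_minus_eq)

lemma cinner_right_ext: "(\<And>z. cinner z x = cinner z y) \<Longrightarrow> x = y"
  by (metis cinner_commute cinner_left_ext)

lemma norm_diff_projection:
  assumes "n \<noteq> 0"
  shows "(norm (w - scaleC (cinner w n / complex_of_real ((norm n)\<^sup>2)) n))\<^sup>2
           = (norm w)\<^sup>2 - (cmod (cinner w n))\<^sup>2 / (norm n)\<^sup>2"
proof -
  define c where "c = cinner w n"
  define r where "r = (norm n)\<^sup>2"
  define t where "t = c / complex_of_real r"
  have r: "r > 0" using assms by (simp add: r_def)
  have "cinner (w - scaleC t n) (w - scaleC t n)
          = cinner w w - cnj t * c - t * cnj c + t * cnj t * cinner n n"
    using cinner_commute[of n w]
    by (simp add: cinner_diff_left cinner_diff_right cinner_scaleC_left cinner_scaleC_right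
        c_def algebra_simps)
  also have "cnj t * c = c * cnj c / complex_of_real r"
    by (simp add: t_def)
  also have "t * cnj c = c * cnj c / complex_of_real r"
    by (simp add: t_def)
  also have "t * cnj t * cinner n n = c * cnj c / complex_of_real r"
    using r by (simp add: t_def cinner_self r_def power2_eq_square)
  finally have "cinner (w - scaleC t n) (w - scaleC t n) = cinner w w - c * cnj c / complex_of_real r"
    by simp
  also have "c * cnj c = complex_of_real ((cmod c)\<^sup>2)"
    by (rule complex_norm_square[symmetric])
  finally have "cinner (w - scaleC t n) (w - scaleC t n) = cinner w w - complex_of_real ((cmod c)\<^sup>2 / r)"
    by simp
  then show ?thesis
    by (simp add: power2_norm_eq_cinner c_def r_def t_def)
qed

lemma Cauchy_Schwarz_cinner: "cmod (cinner x y) \<le> norm x * norm y"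
proof (cases "y = 0")
  case False
  have "0 \<le> (norm x)\<^sup>2 - (cmod (cinner x y))\<^sup>2 / (norm y)\<^sup>2"
    using norm_diff_projection[OF False, of x] by (metis zero_le_power2)
  then have "(cmod (cinner x y))\<^sup>2 \<le> (norm x * norm y)\<^sup>2"
    using False by (simp add: field_simps power_mult_distrib)
  then show ?thesis by (rule power2_le_imp_le) simp
qed simp

lemma cinner_eq_0_if_nearest:
  assumes "\<And>t. norm w \<le> norm (w - scaleC t n)"
  shows "cinner w n = 0"
proof (cases "n = 0")
  case False
  have "(norm w)\<^sup>2 \<le> (norm w)\<^sup>2 - (cmod (cinner w n))\<^sup>2 / (norm n)\<^sup>2"
    unfolding norm_diff_projection[OF False, symmetric] using assms by (simp add: power_mono)
  then have "(cmod (cinner w n))\<^sup>2 \<le> 0"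
    using False by (simp add: divide_le_0_iff)
  then show ?thesis by simp
qed simp

lemma parallelogram_law_cinner:
  fixes a b :: "'a::complex_inner_space"
  shows "(norm (a + b))\<^sup>2 + (norm (a - b))\<^sup>2 = 2 * (norm a)\<^sup>2 + 2 * (norm b)\<^sup>2"
proof -
  have "cinner (a + b) (a + b) + cinner (a - b) (a - b) = 2 * cinner a a + 2 * cinner b b"
    by (simp add: cinner_add_left cinner_add_right cinner_diff_left cinner_diff_right algebra_simps)
  then have "Re (cinner (a + b) (a + b) + cinner (a - b) (a - b)) = Re (2 * cinner a a + 2 * cinner b b)"
    by simp
  then show ?thesis by (simp add: power2_norm_eq_cinner)
qed

section \<open>Nearest points and the Riesz representation theorem\<close>

lemma Cauchy_if_dist_le_null:
  fixes s :: "nat \<Rightarrow> 'a::metric_space"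
  assumes dist: "\<And>m n. dist (s m) (s n) \<le> \<delta> m + \<delta> n" and null: "\<delta> \<longlonglongrightarrow> 0"
  shows "Cauchy s"
proof (rule metric_CauchyI)
  fix e :: real assume "0 < e"
  then have "eventually (\<lambda>n. \<delta> n < e / 2) sequentially"
    using order_tendstoD(2)[OF null, of "e / 2"] by simp
  then obtain M where M: "\<And>n. n \<ge> M \<Longrightarrow> \<delta> n < e / 2"
    by (auto simp: eventually_sequentially)
  have "dist (s m) (s n) < e" if "m \<ge> M" "n \<ge> M" for m n
    using dist[of m n] M[OF that(1)] M[OF that(2)] by linarith
  then show "\<exists>M. \<forall>m\<ge>M. \<forall>n\<ge>M. dist (s m) (s n) < e" by blast
qed

text \<open>By the parallelogram law, points of a convex set whose distance to \<open>x\<close> is close to the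
  infimum are close to each other.\<close>
lemma dist_sq_le_near_infimum:
  fixes C :: "'h::complex_inner_space set"
  assumes "convex C" "a \<in> C" "b \<in> C" "\<And>y. y \<in> C \<Longrightarrow> d \<le> norm (x - y)" "0 \<le> d"
  shows "(dist a b)\<^sup>2 \<le> 2 * ((norm (x - a))\<^sup>2 - d\<^sup>2) + 2 * ((norm (x - b))\<^sup>2 - d\<^sup>2)"
proof -
  define mid where "mid = scaleR (1/2) a + scaleR (1/2) b"
  have "mid \<in> C"
    using convexD[OF assms(1-3)] by (simp add: mid_def)
  moreover have "(x - a) + (x - b) = scaleR 2 (x - mid)"
    by (simp add: mid_def scaleR_diff_right scaleR_add_right scaleR_2 algebra_simps)
  ultimately have "2 * d \<le> norm ((x - a) + (x - b))"
    using assms(4)[of mid] by simp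
  then have "(2 * d)\<^sup>2 \<le> (norm ((x - a) + (x - b)))\<^sup>2"
    using assms(5) by (intro power_mono) auto
  moreover have "norm ((x - a) - (x - b)) = dist a b"
    by (simp add: dist_norm norm_minus_commute)
  ultimately show ?thesis
    using parallelogram_law_cinner[of "x - a" "x - b"] by (simp add: power_mult_distrib)
qed

theorem nearest_point_exists:
  fixes C :: "'h::chilbert_space set"
  assumes "closed C" "convex C" "C \<noteq> {}"
  shows "\<exists>z\<in>C. \<forall>y\<in>C. norm (x - z) \<le> norm (x - y)"
proof -
  define d where "d = infdist x C"
  have d_le: "d \<le> norm (x - y)" if "y \<in> C" for y
    using infdist_le[OF that, of x] by (simp add: d_def dist_norm)
  have d0: "0 \<le> d"
    by (simp add: d_def infdist_nonneg)
  have "\<exists>y\<in>C. (norm (x - y))\<^sup>2 < d\<^sup>2 + inverse (real (Suc n))" for n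
  proof -
    have "d < sqrt (d\<^sup>2 + inverse (real (Suc n)))"
      using d0 by (intro real_less_rsqrt) simp
    then obtain y where "y \<in> C" "dist x y < sqrt (d\<^sup>2 + inverse (real (Suc n)))"
      using assms(3) by (auto simp: d_def infdist_notempty cINF_less_iff)
    then have "(dist x y)\<^sup>2 < (sqrt (d\<^sup>2 + inverse (real (Suc n))))\<^sup>2"
      by (intro power_strict_mono) auto
    then have "(dist x y)\<^sup>2 < d\<^sup>2 + inverse (real (Suc n))"
      by simp
    then show ?thesis using \<open>y \<in> C\<close> by (auto simp: dist_norm)
  qed
  then obtain zs where zs: "\<And>n. zs n \<in> C"
    and close: "\<And>n. (norm (x - zs n))\<^sup>2 < d\<^sup>2 + inverse (real (Suc n))"
    by metis
  define \<delta> where "\<delta> n = sqrt (2 * inverse (real (Suc n)))" for n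
  have "dist (zs m) (zs n) \<le> \<delta> m + \<delta> n" for m n
  proof -
    have "(dist (zs m) (zs n))\<^sup>2 \<le> 2 * ((norm (x - zs m))\<^sup>2 - d\<^sup>2) + 2 * ((norm (x - zs n))\<^sup>2 - d\<^sup>2)"
      by (rule dist_sq_le_near_infimum[OF assms(2) zs zs _ d0]) (rule d_le)
    then have "(dist (zs m) (zs n))\<^sup>2 \<le> 2 * inverse (real (Suc m)) + 2 * inverse (real (Suc n))"
      using close[of m] close[of n] by argo
    then have "dist (zs m) (zs n) \<le> sqrt (2 * inverse (real (Suc m)) + 2 * inverse (real (Suc n)))"
      by (simp add: real_le_rsqrt)
    also have "\<dots> \<le> \<delta> m + \<delta> n"
      unfolding \<delta>_def by (rule sqrt_add_le_add_sqrt) auto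
    finally show ?thesis .
  qed
  moreover have "\<delta> \<longlonglongrightarrow> 0"
    unfolding \<delta>_def using tendsto_real_sqrt[OF tendsto_mult_right_zero[OF LIMSEQ_inverse_real_of_nat, of 2]]
    by simp
  ultimately have "Cauchy zs" by (rule Cauchy_if_dist_le_null)
  then obtain z where lim: "zs \<longlonglongrightarrow> z"
    using Cauchy_convergent convergent_def by blast
  have z: "z \<in> C" using closed_sequentially[OF assms(1) zs lim] .
  have "(\<lambda>n. (norm (x - zs n))\<^sup>2) \<longlonglongrightarrow> (norm (x - z))\<^sup>2"
    by (intro tendsto_intros lim)
  moreover have "(\<lambda>n. d\<^sup>2 + inverse (real (Suc n))) \<longlonglongrightarrow> d\<^sup>2"
    using tendsto_add[OF tendsto_const LIMSEQ_inverse_real_of_nat, of "d\<^sup>2"] by simp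
  ultimately have "(norm (x - z))\<^sup>2 \<le> d\<^sup>2"
    using close less_imp_le by (blast intro: LIMSEQ_le)
  then have "norm (x - z) \<le> d"
    using d0 by (simp add: power2_le_iff_abs_le)
  then show ?thesis using z d_le by force
qed

lemma bounded_linear_functional:
  fixes f :: "'h::complex_inner_space \<Rightarrow> complex"
  assumes "\<And>x y. f (x + y) = f x + f y" "\<And>c x. f (scaleC c x) = c * f x"
    and "\<And>x. cmod (f x) \<le> K * norm x"
  shows "bounded_linear f"
proof
  show "f (scaleR r x) = scaleR r (f x)" for r x
    by (simp add: scaleR_scaleC assms(2) scaleR_conv_of_real)
  show "\<exists>K. \<forall>x. norm (f x) \<le> norm x * K"
    using assms(3) by (auto simp: mult.commute)
qed (rule assms(1))

theorem riesz_representation: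
  fixes f :: "'h::chilbert_space \<Rightarrow> complex"
  assumes add: "\<And>x y. f (x + y) = f x + f y"
    and scale: "\<And>c x. f (scaleC c x) = c * f x"
    and bounded: "\<And>x. cmod (f x) \<le> K * norm x"
  shows "\<exists>y. \<forall>x. f x = cinner x y"
proof (cases "\<forall>x. f x = 0")
  case True then show ?thesis by (intro exI[of _ 0]) simp
next
  case False
  then obtain x0 where fx0: "f x0 \<noteq> 0" by blast
  have diff: "f (x - y) = f x - f y" for x y
    using add[of x "-y"] scale[of "-1" y] by (simp add: scaleC_minus1_left)
  have "closed {x. f x = 0}"
    using closed_Collect_eq[of f "\<lambda>_. 0"] bounded_linear_functional[OF assms]
    by (simp add: linear_continuous_on)
  moreover have "convex {x. f x = 0}"
    by (rule convexI) (simp add: add scaleR_scaleC scale)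
  moreover have "f 0 = 0" using scale[of 0 0] by simp
  ultimately obtain z where fz: "f z = 0" and nearest: "\<And>y. f y = 0 \<Longrightarrow> norm (x0 - z) \<le> norm (x0 - y)"
    using nearest_point_exists[of "{x. f x = 0}" x0] by blast
  define w where "w = x0 - z"
  have fw: "f w = f x0" by (simp add: w_def diff fz)
  have orth: "cinner w v = 0" if "f v = 0" for v
  proof (rule cinner_eq_0_if_nearest)
    fix t
    have "f (z + scaleC t v) = 0" using fz that by (simp add: add scale)
    then show "norm w \<le> norm (w - scaleC t v)"
      using nearest by (simp add: w_def algebra_simps)
  qed
  have ww: "cinner w w \<noteq> 0"
    using fw fx0 \<open>f 0 = 0\<close> by (auto simp: cinner_self_eq_zero)
  have "f x = cinner x (scaleC (cnj (f w / cinner w w)) w)" for x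
  proof -
    define c where "c = f x / f w"
    have "f (x - scaleC c w) = 0" using fw fx0 by (simp add: diff scale c_def)
    then have "cinner (x - scaleC c w) w = 0"
      by (metis orth cinner_commute complex_cnj_zero)
    then have "cinner x w = c * cinner w w"
      by (simp add: cinner_diff_left cinner_scaleC_left)
    then show ?thesis using ww fw fx0 by (simp add: cinner_scaleC_right c_def)
  qed
  then show ?thesis by blast
qed

definition bounded_op :: "('h::complex_inner_space \<Rightarrow> 'h) \<Rightarrow> bool" where
  "bounded_op A \<longleftrightarrow> clinear_op A \<and> (\<exists>K. \<forall>x. norm (A x) \<le> K * norm x)"

definition selfadjoint_op :: "('h::complex_inner_space \<Rightarrow> 'h) \<Rightarrow> bool" where
  "selfadjoint_op P \<longleftrightarrow> (\<forall>x y. cinner (P x) y = cinner x (P y))"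

lemma clinear_op_add: "clinear_op A \<Longrightarrow> A (x + y) = A x + A y"
  by (simp add: clinear_op_def)

lemma clinear_op_scaleC: "clinear_op A \<Longrightarrow> A (scaleC c x) = scaleC c (A x)"
  by (simp add: clinear_op_def)

lemma clinear_op_0: "clinear_op A \<Longrightarrow> A 0 = 0"
  using clinear_op_scaleC[of A 0 0] by simp

lemma clinear_op_diff: "clinear_op A \<Longrightarrow> A (x - y) = A x - A y"
  using clinear_op_add[of A x "-y"] clinear_op_scaleC[of A "-1" y] by (simp add: scaleC_minus1_left)

lemma clinear_op_sum: "clinear_op A \<Longrightarrow> A (\<Sum>i\<in>I. f i) = (\<Sum>i\<in>I. A (f i))"
  by (induction I rule: infinite_finite_induct) (auto simp: clinear_op_add clinear_op_0)

lemma clinear_op_comp: "clinear_op A \<Longrightarrow> clinear_op B \<Longrightarrow> clinear_op (A \<circ> B)"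
  by (simp add: clinear_op_def)

lemma clinear_op_funpow: "clinear_op A \<Longrightarrow> clinear_op (A ^^ n)"
  by (induction n) (auto simp: clinear_op_def)

lemma bounded_op_clinear: "bounded_op A \<Longrightarrow> clinear_op A"
  by (simp add: bounded_op_def)

lemma bounded_opE:
  assumes "bounded_op A"
  obtains K where "K \<ge> 0" "clinear_op A" "\<And>x. norm (A x) \<le> K * norm x"
proof -
  from assms obtain K where A: "clinear_op A" and K: "\<And>x. norm (A x) \<le> K * norm x"
    by (auto simp: bounded_op_def)
  have "norm (A x) \<le> \<bar>K\<bar> * norm x" for x
    using K[of x] mult_right_mono[OF abs_ge_self norm_ge_zero, of K x] by linarith
  with A show thesis by (intro that[of "\<bar>K\<bar>"]) auto
qed

lemma contraction_bounded_op: "contraction A \<Longrightarrow> bounded_op A"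
  by (auto simp: contraction_def bounded_op_def intro: exI[of _ 1])

lemma bounded_op_id: "bounded_op id"
  by (auto simp: bounded_op_def clinear_op_def intro: exI[of _ 1])

lemma bounded_op_comp:
  assumes "bounded_op A" "bounded_op B"
  shows "bounded_op (A \<circ> B)"
proof -
  obtain K where K: "K \<ge> 0" "clinear_op A" "\<And>x. norm (A x) \<le> K * norm x"
    using assms(1) by (rule bounded_opE) blast
  obtain L where L: "L \<ge> 0" "clinear_op B" "\<And>x. norm (B x) \<le> L * norm x"
    using assms(2) by (rule bounded_opE) blast
  have "norm (A (B x)) \<le> (K * L) * norm x" for x
    using K(3)[of "B x"] mult_left_mono[OF L(3)[of x] K(1)] by (simp add: mult.assoc)
  with K(2) L(2) show ?thesis
    by (auto simp: bounded_op_def clinear_op_comp)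
qed

lemma bounded_op_diff:
  assumes "bounded_op A" "bounded_op B"
  shows "bounded_op (\<lambda>x. A x - B x)"
proof -
  obtain K where K: "K \<ge> 0" "clinear_op A" "\<And>x. norm (A x) \<le> K * norm x"
    using assms(1) by (rule bounded_opE) blast
  obtain L where L: "L \<ge> 0" "clinear_op B" "\<And>x. norm (B x) \<le> L * norm x"
    using assms(2) by (rule bounded_opE) blast
  have "norm (A x - B x) \<le> (K + L) * norm x" for x
    using norm_triangle_ineq4[of "A x" "B x"] K(3)[of x] L(3)[of x] by (simp add: algebra_simps)
  moreover have "clinear_op (\<lambda>x. A x - B x)"
    using K(2) L(2) by (simp add: clinear_op_def scaleC_diff_right)
  ultimately show ?thesis by (auto simp: bounded_op_def)
qed

lemma bounded_op_scale:
  assumes "bounded_op A"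
  shows "bounded_op (op_scale c A)"
proof -
  obtain K where K: "K \<ge> 0" "clinear_op A" "\<And>x. norm (A x) \<le> K * norm x"
    using assms by (rule bounded_opE) blast
  have "norm (scaleC c (A x)) \<le> (cmod c * K) * norm x" for x
    using mult_left_mono[OF K(3)[of x], of "cmod c"] by (simp add: norm_scaleC mult.assoc)
  moreover have "clinear_op (op_scale c A)"
    using K(2) by (simp add: clinear_op_def op_scale_def scaleC_add_right scaleC_scaleC mult.commute)
  ultimately show ?thesis by (auto simp: bounded_op_def op_scale_def)
qed

lemma bounded_op_funpow: "bounded_op A \<Longrightarrow> bounded_op (A ^^ n)"
  by (induction n) (auto simp: bounded_op_id bounded_op_comp)

lemma adjoint_exists:
  fixes A :: "'h::chilbert_space \<Rightarrow> 'h"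
  assumes "bounded_op A"
  shows "\<exists>B. \<forall>x y. cinner (A x) y = cinner x (B y)"
proof -
  obtain K where K: "K \<ge> 0" "clinear_op A" "\<And>x. norm (A x) \<le> K * norm x"
    using assms by (rule bounded_opE) blast
  have "\<exists>b. \<forall>x. cinner (A x) y = cinner x b" for y
  proof (rule riesz_representation[where K = "K * norm y"])
    fix x
    have "cmod (cinner (A x) y) \<le> norm (A x) * norm y" by (rule Cauchy_Schwarz_cinner)
    also have "\<dots> \<le> K * norm x * norm y" by (rule mult_right_mono[OF K(3)]) simp
    finally show "cmod (cinner (A x) y) \<le> K * norm y * norm x" by (simp add: algebra_simps)
  qed (simp_all add: clinear_op_add[OF K(2)] clinear_op_scaleC[OF K(2)] cinner_add_left cinner_scaleC_left)
  then show ?thesis by metis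
qed

lemma cinner_adj_right:
  fixes A :: "'h::chilbert_space \<Rightarrow> 'h"
  assumes "bounded_op A"
  shows "cinner (A x) y = cinner x (adj A y)"
proof -
  have "\<forall>x y. cinner (A x) y = cinner x (adj A y)"
    unfolding adj_def by (rule someI_ex[OF adjoint_exists[OF assms]])
  then show ?thesis by blast
qed

lemma cinner_adj_left:
  fixes A :: "'h::chilbert_space \<Rightarrow> 'h"
  assumes "bounded_op A"
  shows "cinner (adj A x) y = cinner x (A y)"
  by (metis cinner_adj_right[OF assms] cinner_commute)

lemma adj_unique:
  fixes A :: "'h::chilbert_space \<Rightarrow> 'h"
  assumes "bounded_op A" and "\<And>x y. cinner (A x) y = cinner x (B y)"
  shows "adj A = B"
proof
  fix y show "adj A y = B y"
    by (rule cinner_right_ext) (metis assms cinner_adj_right)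
qed

lemma bounded_op_adj:
  fixes A :: "'h::chilbert_space \<Rightarrow> 'h"
  assumes A: "bounded_op A"
  shows "bounded_op (adj A)"
proof -
  obtain K where K: "K \<ge> 0" "clinear_op A" "\<And>x. norm (A x) \<le> K * norm x"
    using A by (rule bounded_opE) blast
  have "clinear_op (adj A)"
    unfolding clinear_op_def
    by (intro conjI allI; rule cinner_right_ext)
       (simp_all add: cinner_adj_right[OF A, symmetric] cinner_add_right cinner_scaleC_right)
  moreover have "norm (adj A y) \<le> K * norm y" for y
  proof (cases "adj A y = 0")
    case False
    have "(norm (adj A y))\<^sup>2 = Re (cinner (A (adj A y)) y)"
      by (simp add: power2_norm_eq_cinner cinner_adj_right[OF A])
    also have "\<dots> \<le> norm (A (adj A y)) * norm y"
      using complex_Re_le_cmod Cauchy_Schwarz_cinner order_trans by blast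
    also have "\<dots> \<le> K * norm (adj A y) * norm y"
      by (rule mult_right_mono[OF K(3)]) simp
    finally show ?thesis
      using False by (simp add: power2_eq_square)
  qed (simp add: K(1))
  ultimately show ?thesis by (auto simp: bounded_op_def)
qed

lemma adj_adj:
  fixes A :: "'h::chilbert_space \<Rightarrow> 'h"
  assumes "bounded_op A"
  shows "adj (adj A) = A"
  by (rule adj_unique[OF bounded_op_adj[OF assms]]) (simp add: cinner_adj_left[OF assms])

lemma adj_comp:
  fixes A :: "'h::chilbert_space \<Rightarrow> 'h"
  assumes "bounded_op A" "bounded_op B"
  shows "adj (A \<circ> B) = adj B \<circ> adj A"
  by (rule adj_unique[OF bounded_op_comp[OF assms]]) (simp add: cinner_adj_right assms)

lemma adj_id: "adj (id :: 'h::chilbert_space \<Rightarrow> 'h) = id"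
  by (rule adj_unique[OF bounded_op_id]) simp

lemma adj_scale:
  fixes A :: "'h::chilbert_space \<Rightarrow> 'h"
  assumes "bounded_op A"
  shows "adj (op_scale c A) = op_scale (cnj c) (adj A)"
  by (rule adj_unique[OF bounded_op_scale[OF assms]])
     (simp add: op_scale_def cinner_scaleC_left cinner_scaleC_right cinner_adj_right[OF assms])

lemma adj_funpow:
  fixes A :: "'h::chilbert_space \<Rightarrow> 'h"
  assumes "bounded_op A"
  shows "adj (A ^^ n) = adj A ^^ n"
proof (induction n)
  case (Suc n)
  have "adj (A ^^ Suc n) = adj (A \<circ> A ^^ n)" by simp
  also have "\<dots> = adj (A ^^ n) \<circ> adj A" by (rule adj_comp[OF assms bounded_op_funpow[OF assms]])
  also have "\<dots> = adj A ^^ n \<circ> adj A" by (simp only: Suc)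
  also have "\<dots> = adj A ^^ Suc n" by (rule funpow_Suc_right[symmetric])
  finally show ?case .
qed (simp only: funpow.simps(1) adj_id)

lemma bounded_op_ipow:
  fixes A :: "'h::chilbert_space \<Rightarrow> 'h"
  shows "bounded_op A \<Longrightarrow> bounded_op (op_ipow A m)"
  by (auto simp: op_ipow_def bounded_op_funpow bounded_op_id bounded_op_adj)

lemma adj_ipow:
  fixes A :: "'h::chilbert_space \<Rightarrow> 'h"
  assumes "bounded_op A"
  shows "adj (op_ipow A m) = op_ipow A (- m)"
  using assms by (simp add: op_ipow_def adj_funpow bounded_op_adj adj_adj adj_id)

lemma op_ipow_0: "op_ipow C 0 = id"
  and op_ipow_1: "op_ipow C 1 = C"
  and op_ipow_minus1: "op_ipow C (-1) = adj C"
  and op_ipow_of_nat: "op_ipow C (int n) = C ^^ n"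
  by (auto simp: op_ipow_def not_less_eq_eq)

lemma op_ipow_sgn: "op_ipow C m = op_ipow C (sgn m) ^^ nat \<bar>m\<bar>"
  by (cases "0 :: int" m rule: linorder_cases) (auto simp: op_ipow_def)

lemma op_prod_Nil [simp]: "op_prod f [] = id"
  by (simp add: op_prod_def)

lemma op_prod_Cons [simp]: "op_prod f (x # xs) = f x \<circ> op_prod f xs"
  by (simp add: op_prod_def)

lemma op_prod_append: "op_prod f (xs @ ys) = op_prod f xs \<circ> op_prod f ys"
  by (induction xs) auto

lemma op_prod_cong: "(\<And>l. l \<in> set xs \<Longrightarrow> f l = g l) \<Longrightarrow> op_prod f xs = op_prod g xs"
  by (induction xs) auto

lemma op_prod_eq_id: "(\<And>l. l \<in> set xs \<Longrightarrow> f l = id) \<Longrightarrow> op_prod f xs = id"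
  by (induction xs) auto

lemma bounded_op_prod: "(\<And>i. i \<in> set xs \<Longrightarrow> bounded_op (f i)) \<Longrightarrow> bounded_op (op_prod f xs)"
  by (induction xs) (auto simp: bounded_op_id bounded_op_comp)

lemma op_prod_commute:
  "(\<And>l. l \<in> set xs \<Longrightarrow> X \<circ> f l = f l \<circ> X) \<Longrightarrow> X \<circ> op_prod f xs = op_prod f xs \<circ> X"
proof (induction xs)
  case (Cons a xs)
  have "X \<circ> op_prod f (a # xs) = (X \<circ> f a) \<circ> op_prod f xs" by (simp add: comp_assoc)
  also have "\<dots> = f a \<circ> (X \<circ> op_prod f xs)" using Cons.prems[of a] by (simp add: fun_eq_iff)
  also have "\<dots> = op_prod f (a # xs) \<circ> X" using Cons by (simp add: fun_eq_iff)
  finally show ?case .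
qed simp

lemma comp_op_scale_right: "clinear_op A \<Longrightarrow> A \<circ> op_scale c B = op_scale c (A \<circ> B)"
  by (auto simp: op_scale_def clinear_op_scaleC)

lemma comp_op_scale_left: "op_scale c A \<circ> B = op_scale c (A \<circ> B)"
  by (auto simp: op_scale_def)

lemma op_scale_op_scale: "op_scale c (op_scale d A) = op_scale (c * d) A"
  by (auto simp: op_scale_def scaleC_scaleC)

lemma op_scale_one [simp]: "op_scale 1 A = A"
  by (auto simp: op_scale_def scaleC_one)

lemma op_scale_inverse:
  assumes "X = op_scale c Y" "c \<noteq> 0"
  shows "Y = op_scale (inverse c) X"
  using assms by (simp add: op_scale_op_scale)

lemma q_commute_funpow_right:
  assumes "clinear_op A" "clinear_op B" "A \<circ> B = op_scale c (B \<circ> A)"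
  shows "A \<circ> B ^^ m = op_scale (c ^ m) (B ^^ m \<circ> A)"
proof (induction m)
  case (Suc m)
  have "A \<circ> B ^^ Suc m = (A \<circ> B) \<circ> B ^^ m" by (simp add: comp_assoc)
  also have "\<dots> = op_scale c (B \<circ> (A \<circ> B ^^ m))"
    by (simp add: assms(3) comp_op_scale_left comp_assoc)
  also have "\<dots> = op_scale c (B \<circ> op_scale (c ^ m) (B ^^ m \<circ> A))" by (simp only: Suc)
  also have "\<dots> = op_scale (c ^ Suc m) (B ^^ Suc m \<circ> A)"
    by (simp add: comp_op_scale_right[OF assms(2)] op_scale_op_scale comp_assoc)
  finally show ?case .
qed simp

lemma q_commute_funpow_left:
  assumes "clinear_op A" "clinear_op B" "A \<circ> B = op_scale c (B \<circ> A)"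
  shows "A ^^ n \<circ> B = op_scale (c ^ n) (B \<circ> A ^^ n)"
proof (induction n)
  case (Suc n)
  have "A ^^ Suc n \<circ> B = A \<circ> (A ^^ n \<circ> B)" by (simp add: comp_assoc)
  also have "\<dots> = A \<circ> op_scale (c ^ n) (B \<circ> A ^^ n)" by (simp only: Suc)
  also have "\<dots> = op_scale (c ^ n) ((A \<circ> B) \<circ> A ^^ n)"
    by (simp add: comp_op_scale_right[OF assms(1)] comp_assoc)
  also have "\<dots> = op_scale (c ^ Suc n) (B \<circ> A ^^ Suc n)"
    by (simp add: assms(3) comp_op_scale_left op_scale_op_scale comp_assoc mult.commute)
  finally show ?case .
qed simp

lemma q_commute_funpow:
  assumes "clinear_op A" "clinear_op B" "A \<circ> B = op_scale c (B \<circ> A)"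
  shows "A ^^ n \<circ> B ^^ m = op_scale (c ^ (n * m)) (B ^^ m \<circ> A ^^ n)"
  using q_commute_funpow_left[OF assms(1) clinear_op_funpow[OF assms(2)]
      q_commute_funpow_right[OF assms], of n]
  by (simp add: power_mult mult.commute)

section \<open>Products of commuting positive operators\<close>

text \<open>The sequence \<open>C\<^sub>0 = C\<close>, \<open>C\<^sub>n\<^sub>+\<^sub>1 = C\<^sub>n - C\<^sub>n\<^sup>2\<close> from F. Riesz's proof that the product of
  commuting positive operators is positive: if \<open>0 \<le> C \<le> I\<close> then \<open>0 \<le> C\<^sub>n \<le> I\<close> and
  \<open>C = C\<^sub>0\<^sup>2 + \<dots> + C\<^sub>n\<^sub>-\<^sub>1\<^sup>2 + C\<^sub>n\<close>.\<close>
primrec riesz_seq :: "('h::complex_inner_space \<Rightarrow> 'h) \<Rightarrow> nat \<Rightarrow> ('h \<Rightarrow> 'h)" where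
  "riesz_seq C 0 = C"
| "riesz_seq C (Suc n) = (\<lambda>x. riesz_seq C n x - riesz_seq C n (riesz_seq C n x))"

context
  fixes C :: "'h::complex_inner_space \<Rightarrow> 'h"
  assumes lin: "clinear_op C" and sa: "selfadjoint_op C"
begin

lemma riesz_seq_clinear_selfadjoint: "clinear_op (riesz_seq C n) \<and> selfadjoint_op (riesz_seq C n)"
proof (induction n)
  case (Suc n)
  then have l: "clinear_op (riesz_seq C n)" and s: "selfadjoint_op (riesz_seq C n)" by auto
  have "clinear_op (riesz_seq C (Suc n))"
    using l by (simp add: clinear_op_def clinear_op_diff scaleC_diff_right)
  moreover have "selfadjoint_op (riesz_seq C (Suc n))"
    using s unfolding selfadjoint_op_def by (simp add: cinner_diff_left cinner_diff_right)
  ultimately show ?case by simp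
qed (simp add: lin sa)

lemma riesz_seq_bounds:
  assumes "op_pos C" "op_pos (\<lambda>x. x - C x)"
  shows "op_pos (riesz_seq C n) \<and> op_pos (\<lambda>x. x - riesz_seq C n x)"
proof (induction n)
  case (Suc n)
  define B where "B = riesz_seq C n"
  have l: "clinear_op B" and s: "selfadjoint_op B"
    using riesz_seq_clinear_selfadjoint by (auto simp: B_def)
  have pB: "0 \<le> cinner (B x) x" and pIB: "0 \<le> cinner (x - B x) x" for x
    using Suc by (auto simp: B_def op_pos_def)
  have "0 \<le> cinner (B x - B (B x)) x" for x
  proof -
    have "cinner (B x - B (B x)) x = cinner (B x - B (B x)) (B x) + cinner (B (x - B x)) (x - B x)"
      by (simp add: clinear_op_diff[OF l] cinner_diff_left cinner_diff_right)
    then show ?thesis using pIB[of "B x"] pB[of "x - B x"] by simp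
  qed
  moreover have "0 \<le> cinner (x - (B x - B (B x))) x" for x
  proof -
    have "cinner (x - (B x - B (B x))) x = cinner (x - B x) x + cinner (B x) (B x)"
      using s unfolding selfadjoint_op_def by (simp add: cinner_diff_left cinner_diff_right)
    then show ?thesis using pIB[of x] cinner_self_nonneg[of "B x"] by simp
  qed
  ultimately show ?case by (simp add: op_pos_def B_def)
qed (simp add: assms)

lemma riesz_seq_commute:
  assumes "clinear_op P" "\<And>x. P (C x) = C (P x)"
  shows "P (riesz_seq C n x) = riesz_seq C n (P x)"
  by (induction n arbitrary: x) (simp_all add: assms clinear_op_diff)

lemma riesz_seq_telescope:
  assumes "clinear_op P" "\<And>x. P (C x) = C (P x)"
  shows "cinner (P (C x)) x
           = (\<Sum>j<n. cinner (P (riesz_seq C j x)) (riesz_seq C j x)) + cinner (P (riesz_seq C n x)) x"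
proof (induction n)
  case (Suc n)
  define B where "B = riesz_seq C n"
  have "selfadjoint_op B" using riesz_seq_clinear_selfadjoint by (simp add: B_def)
  then have "cinner (P (B (B x))) x = cinner (P (B x)) (B x)"
    using riesz_seq_commute[OF assms] by (simp add: selfadjoint_op_def B_def)
  then have "cinner (P (B x)) x = cinner (P (riesz_seq C (Suc n) x)) x + cinner (P (B x)) (B x)"
    by (simp add: B_def clinear_op_diff[OF assms(1)] cinner_diff_left)
  then show ?case using Suc by (simp add: B_def)
qed simp

lemma riesz_seq_small:
  assumes "op_pos C" "op_pos (\<lambda>x. x - C x)" "e > 0"
  shows "\<exists>j. norm (riesz_seq C j x) < e"
proof (rule ccontr)
  assume "\<not> ?thesis"
  then have "e \<le> norm (riesz_seq C j x)" for j
    by (simp add: not_less)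
  then have large: "e\<^sup>2 \<le> (norm (riesz_seq C j x))\<^sup>2" for j
    using assms(3) by (simp add: power_mono)
  obtain n :: nat where n: "(norm x)\<^sup>2 < real n * e\<^sup>2"
    using ex_less_of_nat_mult[of "e\<^sup>2" "(norm x)\<^sup>2"] assms(3) by auto
  have idc: "clinear_op (id :: 'h \<Rightarrow> 'h)" by (simp add: clinear_op_def)
  have "real n * e\<^sup>2 \<le> (\<Sum>j<n. (norm (riesz_seq C j x))\<^sup>2)"
    using sum_mono[of "{..<n}" "\<lambda>_. e\<^sup>2", OF large] by simp
  also have "\<dots> \<le> Re (cinner (C x) x)"
  proof -
    have "Re (cinner (C x) x) = (\<Sum>j<n. (norm (riesz_seq C j x))\<^sup>2) + Re (cinner (riesz_seq C n x) x)"
      using riesz_seq_telescope[OF idc, of x n] by (simp add: power2_norm_eq_cinner)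
    moreover have "0 \<le> Re (cinner (riesz_seq C n x) x)"
      using riesz_seq_bounds[OF assms(1,2)] by (simp add: op_pos_def less_eq_complex_def)
    ultimately show ?thesis by linarith
  qed
  also have "\<dots> \<le> (norm x)\<^sup>2"
    using assms(2) by (simp add: op_pos_def less_eq_complex_def cinner_diff_left power2_norm_eq_cinner)
  finally show False using n by simp
qed

theorem op_pos_comp_commuting:
  assumes bP: "bounded_op P" and saP: "selfadjoint_op P" and pP: "op_pos P"
    and pC: "op_pos C" and pIC: "op_pos (\<lambda>x. x - C x)"
    and comm: "\<And>x. P (C x) = C (P x)"
  shows "op_pos (P \<circ> C)"
  unfolding op_pos_def
proof
  fix x
  obtain K where K: "K \<ge> 0" "clinear_op P" "\<And>y. norm (P y) \<le> K * norm y"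
    using bP by (rule bounded_opE) blast
  define z where "z = cinner (P (C x)) x"
  have "z = cinner x (P (C x))"
    using saP sa by (simp add: selfadjoint_op_def z_def comm)
  then have "z = cnj z"
    by (simp add: z_def flip: cinner_commute)
  then have "Im z = 0"
    by (metis Reals_cnj_iff complex_is_Real_iff)
  moreover have "0 \<le> Re z"
  proof (rule field_le_epsilon)
    fix e :: real assume "e > 0"
    define e' where "e' = e / (K * norm x + 1)"
    have "0 \<le> K * norm x" using K(1) by simp
    then have "e' > 0" and e': "e' * (K * norm x) < e"
      using \<open>e > 0\<close> by (auto simp: e'_def field_simps)
    then obtain j where "norm (riesz_seq C j x) < e'"
      using riesz_seq_small[OF pC pIC] by blast
    then have j: "norm (riesz_seq C j x) * (K * norm x) < e"
      using e' \<open>0 \<le> K * norm x\<close> mult_right_mono[of "norm (riesz_seq C j x)" e' "K * norm x"]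
      by linarith
    have "Re z = (\<Sum>i<j. Re (cinner (P (riesz_seq C i x)) (riesz_seq C i x)))
                 + Re (cinner (P (riesz_seq C j x)) x)"
      using riesz_seq_telescope[OF K(2) comm, of x j] by (simp add: z_def)
    moreover have "0 \<le> (\<Sum>i<j. Re (cinner (P (riesz_seq C i x)) (riesz_seq C i x)))"
      using pP by (intro sum_nonneg) (simp add: op_pos_def less_eq_complex_def)
    moreover have "- Re (cinner (P (riesz_seq C j x)) x) \<le> K * norm (riesz_seq C j x) * norm x"
      using abs_Re_le_cmod[of "cinner (P (riesz_seq C j x)) x"]
        Cauchy_Schwarz_cinner[of "P (riesz_seq C j x)" x]
        mult_right_mono[OF K(3)[of "riesz_seq C j x"] norm_ge_zero[of x]]
      by linarith
    ultimately show "0 \<le> Re z + e" using j by (simp add: algebra_simps)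
  qed
  ultimately show "0 \<le> cinner ((P \<circ> C) x) x"
    by (simp add: less_eq_complex_def z_def)
qed

end

section \<open>A positivity criterion for Toeplitz-type kernels\<close>

lemma additive_sum:
  fixes T :: "'v::comm_monoid_add \<Rightarrow> 'w::cancel_comm_monoid_add"
  assumes "\<And>x y. T (x + y) = T x + T y"
  shows "T (\<Sum>i\<in>I. g i) = (\<Sum>i\<in>I. T (g i))"
proof -
  have "T 0 = 0" using assms[of 0 0] by simp
  then show ?thesis
    by (induction I rule: infinite_finite_induct) (auto simp: assms)
qed

lemma sum_funpow_unfold:
  fixes T :: "'v::cancel_comm_monoid_add \<Rightarrow> 'v"
  assumes "\<And>x y. T (x + y) = T x + T y" "L \<le> N"
  shows "(\<Sum>m\<in>{L..N}. (T ^^ (m - L)) (f m)) = f L + T (\<Sum>m\<in>{Suc L..N}. (T ^^ (m - Suc L)) (f m))"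
proof -
  have "(\<Sum>m\<in>{Suc L..N}. (T ^^ (m - L)) (f m)) = (\<Sum>m\<in>{Suc L..N}. T ((T ^^ (m - Suc L)) (f m)))"
  proof (rule sum.cong[OF refl])
    fix m assume "m \<in> {Suc L..N}"
    then have "m - L = Suc (m - Suc L)" using Suc_diff_Suc[of L m] by simp
    then show "(T ^^ (m - L)) (f m) = T ((T ^^ (m - Suc L)) (f m))" by simp
  qed
  moreover have "{L..N} = insert L {Suc L..N}" using assms(2) by auto
  ultimately show ?thesis by (simp add: additive_sum[OF assms(1)])
qed

context
  fixes B :: "'v::ab_group_add \<Rightarrow> 'v \<Rightarrow> complex" and T :: "'v \<Rightarrow> 'v"
    and f :: "nat \<Rightarrow> 'v" and M :: "nat \<Rightarrow> nat \<Rightarrow> complex"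
  assumes B_add_left: "\<And>x y z. B (x + y) z = B x z + B y z"
    and B_add_right: "\<And>x y z. B x (y + z) = B x y + B x z"
    and B_hermitian: "\<And>x y. B y x = cnj (B x y)"
    and T_add: "\<And>x y. T (x + y) = T x + T y"
    and T_contractive: "\<And>x. 0 \<le> B x x - B (T x) (T x)"
    and M_eq: "\<And>n n'. n' \<le> n \<Longrightarrow> M n n' = B ((T ^^ (n - n')) (f n)) (f n')"
    and M_hermitian: "\<And>n n'. M n' n = cnj (M n n')"
begin

text \<open>With \<open>y\<^sub>L = \<Sum>\<^sub>m\<^sub>\<ge>\<^sub>L T\<^sup>m\<^sup>-\<^sup>L f\<^sub>m\<close>, the tail \<open>\<Sum>\<^sub>n\<^sub>,\<^sub>n\<^sub>'\<^sub>\<ge>\<^sub>L M n n'\<close> exceeds \<open>B y\<^sub>L y\<^sub>L\<close> by a sum of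
  the nonnegative defects \<open>B y y - B (T y) (T y)\<close> at \<open>y = y\<^sub>L\<^sub>+\<^sub>1, \<dots>, y\<^sub>N\<close>.\<close>
lemma toeplitz_tail_nonneg:
  assumes "L \<le> N"
  shows "0 \<le> (\<Sum>n\<in>{L..N}. \<Sum>n'\<in>{L..N}. M n n')
              - B (\<Sum>m\<in>{L..N}. (T ^^ (m - L)) (f m)) (\<Sum>m\<in>{L..N}. (T ^^ (m - L)) (f m))"
  using assms
proof (induction L rule: inc_induct)
  case base
  then show ?case by (simp add: M_eq)
next
  case (step L)
  define y where "y L = (\<Sum>m\<in>{L..N}. (T ^^ (m - L)) (f m))" for L
  define Q where "Q L = (\<Sum>n\<in>{L..N}. \<Sum>n'\<in>{L..N}. M n n')" for L
  define S where "S = (\<Sum>n\<in>{Suc L..N}. M n L)"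
  have split: "{L..N} = insert L {Suc L..N}" using step.hyps by auto
  have y: "y L = f L + T (y (Suc L))"
    unfolding y_def using sum_funpow_unfold[OF T_add] step.hyps by simp
  have "S = (\<Sum>n\<in>{Suc L..N}. B (T ((T ^^ (n - Suc L)) (f n))) (f L))"
    unfolding S_def
  proof (rule sum.cong[OF refl])
    fix n assume "n \<in> {Suc L..N}"
    then have "n - L = Suc (n - Suc L)" "L \<le> n" using Suc_diff_Suc[of L n] by auto
    then show "M n L = B (T ((T ^^ (n - Suc L)) (f n))) (f L)" by (simp add: M_eq)
  qed
  also have "\<dots> = B (T (y (Suc L))) (f L)"
    by (simp add: y_def additive_sum[OF T_add] additive_sum[where T = "\<lambda>x. B x (f L)"] B_add_left)
  finally have S: "S = B (T (y (Suc L))) (f L)" .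
  have "(\<Sum>n'\<in>{Suc L..N}. M L n') = cnj S"
    unfolding S_def by (simp add: M_hermitian[of L] cnj_sum)
  moreover have "Q L = (\<Sum>n\<in>{L..N}. M n L) + (\<Sum>n\<in>{L..N}. \<Sum>n'\<in>{Suc L..N}. M n n')"
    unfolding Q_def split by (simp add: sum.distrib)
  moreover have "(\<Sum>n\<in>{L..N}. M n L) = M L L + S"
    unfolding split S_def by simp
  moreover have "(\<Sum>n\<in>{L..N}. \<Sum>n'\<in>{Suc L..N}. M n n') = (\<Sum>n'\<in>{Suc L..N}. M L n') + Q (Suc L)"
    unfolding split Q_def by simp
  ultimately have "Q L = M L L + S + cnj S + Q (Suc L)"
    by (simp add: algebra_simps)
  moreover have "B (y L) (y L) = B (f L) (f L) + cnj S + S + B (T (y (Suc L))) (T (y (Suc L)))"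
    unfolding y using S B_hermitian[of "T (y (Suc L))" "f L"] by (simp add: B_add_left B_add_right)
  ultimately have "Q L - B (y L) (y L)
      = (Q (Suc L) - B (y (Suc L)) (y (Suc L))) + (B (y (Suc L)) (y (Suc L)) - B (T (y (Suc L))) (T (y (Suc L))))"
    by (simp add: M_eq algebra_simps)
  moreover have "0 \<le> Q (Suc L) - B (y (Suc L)) (y (Suc L))"
    using step.IH by (simp add: Q_def y_def)
  ultimately show ?case
    using T_contractive[of "y (Suc L)"] by (simp add: Q_def y_def)
qed

theorem toeplitz_sum_nonneg:
  assumes "\<And>x. 0 \<le> B x x"
  shows "0 \<le> (\<Sum>n\<le>N. \<Sum>n'\<le>N. M n n')"
proof -
  let ?y = "\<Sum>m\<in>{0..N}. (T ^^ (m - 0)) (f m)"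
  have "0 \<le> ((\<Sum>n\<in>{0..N}. \<Sum>n'\<in>{0..N}. M n n') - B ?y ?y) + B ?y ?y"
    using toeplitz_tail_nonneg[of 0] assms[of ?y] by (intro add_nonneg_nonneg) auto
  then show ?thesis by (simp add: atMost_atLeast0)
qed

end

lemma sum_swap_inner:
  "(\<Sum>n\<in>N. \<Sum>i\<in>I. \<Sum>j\<in>J. G n i j) = (\<Sum>i\<in>I. \<Sum>j\<in>J. \<Sum>n\<in>N. G n i j)"
proof -
  have "(\<Sum>n\<in>N. \<Sum>i\<in>I. \<Sum>j\<in>J. G n i j) = (\<Sum>i\<in>I. \<Sum>n\<in>N. \<Sum>j\<in>J. G n i j)"
    by (rule sum.swap)
  also have "\<dots> = (\<Sum>i\<in>I. \<Sum>j\<in>J. \<Sum>n\<in>N. G n i j)"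
    by (rule sum.cong[OF refl], rule sum.swap)
  finally show ?thesis .
qed

lemma sum_level_sets:
  fixes \<nu> :: "'i \<Rightarrow> nat" and X :: "'i \<Rightarrow> 'i \<Rightarrow> 'a::comm_monoid_add"
  assumes "\<And>i. i \<in> I \<Longrightarrow> \<nu> i \<le> N"
  shows "(\<Sum>n\<le>N. \<Sum>n'\<le>N. \<Sum>i\<in>I. \<Sum>j\<in>I. if \<nu> i = n \<and> \<nu> j = n' then X i j else 0)
           = (\<Sum>i\<in>I. \<Sum>j\<in>I. X i j)"
proof -
  have "(\<Sum>n'\<le>N. if \<nu> i = n \<and> \<nu> j = n' then X i j else 0) = (if \<nu> i = n then X i j else 0)"
    if "j \<in> I" for i j n
    using assms[OF that] by (cases "\<nu> i = n") auto
  then have pair: "(\<Sum>n\<le>N. \<Sum>n'\<le>N. if \<nu> i = n \<and> \<nu> j = n' then X i j else 0) = X i j"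
    if "i \<in> I" "j \<in> I" for i j
    using that assms[OF that(1)] by simp
  have "(\<Sum>n\<le>N. \<Sum>n'\<le>N. \<Sum>i\<in>I. \<Sum>j\<in>I. if \<nu> i = n \<and> \<nu> j = n' then X i j else 0)
      = (\<Sum>i\<in>I. \<Sum>j\<in>I. \<Sum>n\<le>N. \<Sum>n'\<le>N. if \<nu> i = n \<and> \<nu> j = n' then X i j else 0)"
    by (subst sum.cong[OF refl sum_swap_inner]) (rule sum_swap_inner)
  also have "\<dots> = (\<Sum>i\<in>I. \<Sum>j\<in>I. X i j)"
    by (intro sum.cong refl) (rule pair)
  finally show ?thesis .
qed

lemma level_blocks_hermitian:
  fixes \<nu> :: "'i \<Rightarrow> nat" and X :: "'i \<Rightarrow> 'i \<Rightarrow> complex"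
  assumes "\<And>i j. cnj (X i j) = X j i"
  shows "(\<Sum>i\<in>I. \<Sum>j\<in>I. if \<nu> i = n' \<and> \<nu> j = n then X i j else 0)
           = cnj (\<Sum>i\<in>I. \<Sum>j\<in>I. if \<nu> i = n \<and> \<nu> j = n' then X i j else 0)"
proof -
  have "cnj (\<Sum>i\<in>I. \<Sum>j\<in>I. if \<nu> i = n \<and> \<nu> j = n' then X i j else 0)
      = (\<Sum>i\<in>I. \<Sum>j\<in>I. if \<nu> i = n \<and> \<nu> j = n' then X j i else 0)"
    unfolding cnj_sum by (intro sum.cong refl) (simp add: assms)
  also have "\<dots> = (\<Sum>j\<in>I. \<Sum>i\<in>I. if \<nu> i = n \<and> \<nu> j = n' then X j i else 0)"
    by (rule sum.swap)
  also have "\<dots> = (\<Sum>i\<in>I. \<Sum>j\<in>I. if \<nu> i = n' \<and> \<nu> j = n then X i j else 0)"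
    by (intro sum.cong refl) auto
  finally show ?thesis by simp
qed

lemma cnj_unimodular:
  assumes "cmod z = 1"
  shows "cnj z = inverse (z::complex)"
proof -
  have "z * cnj z = 1" using complex_norm_square[of z] assms by simp
  then show ?thesis by (metis inverse_unique mult.commute)
qed

lemma prod_powi_add:
  "(\<And>p. p \<in> F \<Longrightarrow> z p \<noteq> 0) \<Longrightarrow>
   (\<Prod>p\<in>F. z p powi e1 p) * (\<Prod>p\<in>F. z p powi e2 p) = (\<Prod>p\<in>F. (z p :: complex) powi (e1 p + e2 p))"
  unfolding prod.distrib[symmetric] by (rule prod.cong) (auto simp: power_int_add)

lemma inverse_prod_powi:
  "inverse (\<Prod>p\<in>F. z p powi e p) = (\<Prod>p\<in>F. (z p :: complex) powi (- e p))"
  unfolding prod_inversef[symmetric] by (rule prod.cong) (auto simp: power_int_minus)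

lemma cnj_prod_powi:
  "(\<And>p. p \<in> F \<Longrightarrow> cmod (z p) = 1) \<Longrightarrow>
   cnj (\<Prod>p\<in>F. z p powi e p) = (\<Prod>p\<in>F. (z p :: complex) powi (- e p))"
  unfolding cnj_prod by (rule prod.cong) (auto simp: cnj_unimodular power_int_inverse power_int_minus)

lemma prod_powi_nonzero:
  "(\<And>p. p \<in> F \<Longrightarrow> z p \<noteq> 0) \<Longrightarrow> (\<Prod>p\<in>F. (z p :: complex) powi e p) \<noteq> 0"
  by (induction F rule: infinite_finite_induct) (auto simp: power_int_not_zero)

lemma prod_pairs_powi_add:
  assumes "\<And>i j. (i, j) \<in> F \<Longrightarrow> z i j \<noteq> 0"
  shows "(\<Prod>(i, j)\<in>F. z i j powi e1 i j) * (\<Prod>(i, j)\<in>F. z i j powi e2 i j) =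
         (\<Prod>(i, j)\<in>F. (z i j :: complex) powi (e1 i j + e2 i j))"
  unfolding prod.distrib[symmetric]
  by (rule prod.cong[OF refl]) (clarsimp simp: power_int_add assms split: prod.splits)

lemma cnj_prod_pairs_powi:
  assumes "\<And>i j. (i, j) \<in> F \<Longrightarrow> cmod (z i j) = 1"
  shows "cnj (\<Prod>(i, j)\<in>F. z i j powi e i j) = (\<Prod>(i, j)\<in>F. (z i j :: complex) powi (- e i j))"
  unfolding cnj_prod
  by (rule prod.cong[OF refl])
     (clarsimp simp: cnj_unimodular assms power_int_inverse power_int_minus split: prod.splits)

lemma prod_pairs_powi_cong:
  assumes "\<And>i j. (i, j) \<in> F \<Longrightarrow> e1 i j = e2 i j"
  shows "(\<Prod>(i, j)\<in>F. z i j powi e1 i j) = (\<Prod>(i, j)\<in>F. (z i j :: complex) powi e2 i j)"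
  by (rule prod.cong[OF refl]) (clarsimp simp: assms split: prod.splits)

lemma pairs_Suc: "pairs (Suc m) = pairs m \<union> (\<lambda>i. (i, Suc m)) ` {1..m}"
  by (auto simp: pairs_def)

lemma pairs_mono: "m \<le> k \<Longrightarrow> pairs m \<subseteq> pairs k"
  by (auto simp: pairs_def)

lemma finite_pairs: "finite (pairs m)"
  by (rule finite_subset[of _ "{0..m} \<times> {0..m}"]) (auto simp: pairs_def)

lemma prod_pairs_Suc:
  "(\<Prod>p\<in>pairs (Suc m). h p) = (\<Prod>p\<in>pairs m. h p) * (\<Prod>i\<in>{1..m}. h (i, Suc m))"
proof -
  have "pairs m \<inter> (\<lambda>i. (i, Suc m)) ` {1..m} = {}" by (auto simp: pairs_def)
  moreover have "inj_on (\<lambda>i. (i, Suc m)) {1..m}" by (auto simp: inj_on_def)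
  ultimately show ?thesis
    unfolding pairs_Suc by (simp add: prod.union_disjoint finite_pairs prod.reindex)
qed

locale doubly_q_commuting =
  fixes k :: nat and Ts :: "nat \<Rightarrow> ('h::chilbert_space \<Rightarrow> 'h)" and q :: "nat \<Rightarrow> nat \<Rightarrow> complex"
  assumes contraction_Ts: "\<And>i. i \<in> {1..k} \<Longrightarrow> contraction (Ts i)"
    and cmod_q: "\<And>i j. (i, j) \<in> pairs k \<Longrightarrow> cmod (q i j) = 1"
    and Ts_q_commute: "\<And>i j. (i, j) \<in> pairs k \<Longrightarrow> Ts i \<circ> Ts j = op_scale (q i j) (Ts j \<circ> Ts i)"
    and Ts_adj_q_commute: "\<And>i j. (i, j) \<in> pairs k \<Longrightarrow>
                  Ts i \<circ> adj (Ts j) = op_scale (cnj (q i j)) (adj (Ts j) \<circ> Ts i)"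
begin

abbreviation Tpow :: "nat \<Rightarrow> int \<Rightarrow> ('h \<Rightarrow> 'h)" where
  "Tpow i a \<equiv> op_ipow (Ts i) a"

lemma bounded_Ts: "i \<in> {1..k} \<Longrightarrow> bounded_op (Ts i)"
  using contraction_Ts contraction_bounded_op by blast

lemma bounded_Tpow: "i \<in> {1..k} \<Longrightarrow> bounded_op (Tpow i a)"
  using bounded_Ts bounded_op_ipow by blast

lemma clinear_Tpow: "i \<in> {1..k} \<Longrightarrow> clinear_op (Tpow i a)"
  using bounded_Tpow bounded_op_clinear by blast

lemma q_nonzero: "(i, j) \<in> pairs k \<Longrightarrow> q i j \<noteq> 0"
  using cmod_q by fastforce

lemma cnj_q: "(i, j) \<in> pairs k \<Longrightarrow> cnj (q i j) = inverse (q i j)"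
  using cmod_q cnj_unimodular by blast

lemma adj_Ts_q_commute:
  assumes p: "(i, j) \<in> pairs k"
  shows "adj (Ts i) \<circ> Ts j = op_scale (cnj (q i j)) (Ts j \<circ> adj (Ts i))"
proof -
  have bi: "bounded_op (Ts i)" and bj: "bounded_op (Ts j)"
    using p bounded_Ts by (auto simp: pairs_def)
  have "adj (Ts i \<circ> adj (Ts j)) = adj (op_scale (cnj (q i j)) (adj (Ts j) \<circ> Ts i))"
    using Ts_adj_q_commute[OF p] by simp
  then have "Ts j \<circ> adj (Ts i) = op_scale (q i j) (adj (Ts i) \<circ> Ts j)"
    by (simp add: adj_comp adj_scale bi bj bounded_op_adj bounded_op_comp adj_adj)
  from op_scale_inverse[OF this q_nonzero[OF p]] show ?thesis by (simp add: cnj_q[OF p])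
qed

lemma adj_Ts_adj_q_commute:
  assumes p: "(i, j) \<in> pairs k"
  shows "adj (Ts i) \<circ> adj (Ts j) = op_scale (q i j) (adj (Ts j) \<circ> adj (Ts i))"
proof -
  have bi: "bounded_op (Ts i)" and bj: "bounded_op (Ts j)"
    using p bounded_Ts by (auto simp: pairs_def)
  have "adj (Ts i \<circ> Ts j) = adj (op_scale (q i j) (Ts j \<circ> Ts i))"
    using Ts_q_commute[OF p] by simp
  then have "adj (Ts j) \<circ> adj (Ts i) = op_scale (cnj (q i j)) (adj (Ts i) \<circ> adj (Ts j))"
    by (simp add: adj_comp adj_scale bi bj bounded_op_comp)
  from op_scale_inverse[OF this] show ?thesis using q_nonzero[OF p] by (simp add: cnj_q[OF p])
qed

text \<open>Writing \<open>T\<^sub>i(x) = T\<^sub>i(sgn x)\<^bsup>|x|\<^esup>\<close>, the four defining relations for \<open>T\<^sub>i(\<plusminus>1)\<close> and \<open>T\<^sub>j(\<plusminus>1)\<close>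
  give the commutation rule for all integer powers.\<close>
lemma Tpow_q_commute:
  assumes p: "(i, j) \<in> pairs k"
  shows "Tpow i x \<circ> Tpow j y = op_scale (q i j powi (x * y)) (Tpow j y \<circ> Tpow i x)"
proof -
  have ij: "i \<in> {1..k}" "j \<in> {1..k}" using p by (auto simp: pairs_def)
  have sgn: "Tpow i a \<circ> Tpow j b = op_scale (q i j powi (a * b)) (Tpow j b \<circ> Tpow i a)"
    if "a \<in> {-1, 0, 1}" "b \<in> {-1, 0, 1}" for a b
    using that Ts_q_commute[OF p] Ts_adj_q_commute[OF p] adj_Ts_q_commute[OF p]
      adj_Ts_adj_q_commute[OF p]
    by (auto simp: cnj_q[OF p] power_int_minus op_ipow_0 op_ipow_1 op_ipow_minus1)
  have "Tpow i x \<circ> Tpow j y = Tpow i (sgn x) ^^ nat \<bar>x\<bar> \<circ> Tpow j (sgn y) ^^ nat \<bar>y\<bar>"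
    by (simp only: op_ipow_sgn[of "Ts i" x] op_ipow_sgn[of "Ts j" y])
  also have "\<dots> = op_scale ((q i j powi (sgn x * sgn y)) ^ (nat \<bar>x\<bar> * nat \<bar>y\<bar>))
                     (Tpow j (sgn y) ^^ nat \<bar>y\<bar> \<circ> Tpow i (sgn x) ^^ nat \<bar>x\<bar>)"
    by (rule q_commute_funpow[OF clinear_Tpow[OF ij(1)] clinear_Tpow[OF ij(2)] sgn])
       (auto simp: sgn_if)
  also have "(q i j powi (sgn x * sgn y)) ^ (nat \<bar>x\<bar> * nat \<bar>y\<bar>) = q i j powi (x * y)"
    by (simp add: power_int_power' abs_mult[symmetric] mult_sgn_abs
        flip: sgn_mult mult.assoc)
  finally show ?thesis
    by (simp only: op_ipow_sgn[of "Ts i" x, symmetric] op_ipow_sgn[of "Ts j" y, symmetric])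
qed

definition qsym :: "nat \<Rightarrow> nat \<Rightarrow> complex" where
  "qsym i j = (if i < j then q i j else inverse (q j i))"

lemma Tpow_qsym_commute:
  assumes "i \<in> {1..k}" "j \<in> {1..k}" "i \<noteq> j"
  shows "Tpow i x \<circ> Tpow j y = op_scale (qsym i j powi (x * y)) (Tpow j y \<circ> Tpow i x)"
    and "qsym i j \<noteq> 0"
proof -
  show "Tpow i x \<circ> Tpow j y = op_scale (qsym i j powi (x * y)) (Tpow j y \<circ> Tpow i x)"
  proof (cases "i < j")
    case True
    then have "(i, j) \<in> pairs k" using assms by (auto simp: pairs_def)
    then show ?thesis using Tpow_q_commute True by (simp add: qsym_def)
  next
    case False
    then have p: "(j, i) \<in> pairs k" using assms by (auto simp: pairs_def)
    from op_scale_inverse[OF Tpow_q_commute[OF p, of y x]] q_nonzero[OF p]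
    show ?thesis using False by (simp add: qsym_def power_int_inverse mult.commute)
  qed
  show "qsym i j \<noteq> 0"
    using q_nonzero assms by (auto simp: qsym_def pairs_def)
qed

definition Tsq :: "nat \<Rightarrow> ('h \<Rightarrow> 'h)" where
  "Tsq j = adj (Ts j) \<circ> Ts j"

definition defect :: "nat \<Rightarrow> ('h \<Rightarrow> 'h)" where
  "defect j = (\<lambda>v. v - Tsq j v)"

text \<open>The scalars picked up by moving \<open>T\<^sub>i(x)\<close> past \<open>T\<^sub>j\<^sup>*\<close> and past \<open>T\<^sub>j\<close> cancel.\<close>
lemma Tpow_Tsq_commute:
  assumes i: "i \<in> {1..k}" and j: "j \<in> {1..k}" and ij: "i \<noteq> j"
  shows "Tpow i x \<circ> Tsq j = Tsq j \<circ> Tpow i x"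
proof -
  note qc = Tpow_qsym_commute[OF i j ij]
  have l: "clinear_op (adj (Ts j))" using clinear_Tpow[OF j, of "-1"] by (simp add: op_ipow_minus1)
  have "Tpow i x \<circ> Tsq j = (Tpow i x \<circ> Tpow j (-1)) \<circ> Tpow j 1"
    by (simp add: Tsq_def comp_assoc op_ipow_1 op_ipow_minus1)
  also have "\<dots> = op_scale (qsym i j powi (x * -1)) (Tpow j (-1) \<circ> (Tpow i x \<circ> Tpow j 1))"
    by (simp only: qc(1) comp_op_scale_left comp_assoc)
  also have "\<dots> = op_scale (qsym i j powi (x * -1))
                       (Tpow j (-1) \<circ> op_scale (qsym i j powi (x * 1)) (Tpow j 1 \<circ> Tpow i x))"
    by (simp only: qc(1))
  also have "\<dots> = op_scale (qsym i j powi (- x) * qsym i j powi x) (Tsq j \<circ> Tpow i x)"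
    by (simp add: comp_op_scale_right[OF l] op_scale_op_scale Tsq_def comp_assoc op_ipow_1 op_ipow_minus1)
  also have "qsym i j powi (- x) * qsym i j powi x = 1"
    using qc(2) by (simp add: power_int_minus)
  finally show ?thesis by (simp only: op_scale_one)
qed

lemma Tpow_defect_commute:
  assumes "i \<in> {1..k}" "j \<in> {1..k}" "i \<noteq> j"
  shows "Tpow i x \<circ> defect j = defect j \<circ> Tpow i x"
  using fun_cong[OF Tpow_Tsq_commute[OF assms, of x]]
  by (auto simp: defect_def clinear_op_diff[OF clinear_Tpow[OF assms(1)]])

lemma bounded_Tsq: "j \<in> {1..k} \<Longrightarrow> bounded_op (Tsq j)"
  unfolding Tsq_def using bounded_Ts bounded_op_adj bounded_op_comp by blast

lemma bounded_defect: "j \<in> {1..k} \<Longrightarrow> bounded_op (defect j)"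
  unfolding defect_def using bounded_Tsq bounded_op_id bounded_op_diff[of id "Tsq j"] by (simp add: id_def)

lemma selfadjoint_Tsq: "j \<in> {1..k} \<Longrightarrow> selfadjoint_op (Tsq j)"
  unfolding selfadjoint_op_def Tsq_def using bounded_Ts by (simp add: cinner_adj_left cinner_adj_right)

lemma selfadjoint_defect: "j \<in> {1..k} \<Longrightarrow> selfadjoint_op (defect j)"
  using selfadjoint_Tsq unfolding selfadjoint_op_def defect_def
  by (simp add: cinner_diff_left cinner_diff_right)

lemma op_pos_id_minus_defect: "j \<in> {1..k} \<Longrightarrow> op_pos (\<lambda>x. x - defect j x)"
  using bounded_Ts by (simp add: op_pos_def defect_def Tsq_def cinner_adj_left cinner_self_nonneg)

lemma op_pos_defect:
  assumes j: "j \<in> {1..k}"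
  shows "op_pos (defect j)"
  unfolding op_pos_def
proof
  fix x
  have "cinner (defect j x) x = complex_of_real ((norm x)\<^sup>2 - (norm (Ts j x))\<^sup>2)"
    using bounded_Ts[OF j] by (simp add: defect_def Tsq_def cinner_diff_left cinner_adj_left cinner_self)
  moreover have "norm (Ts j x) \<le> norm x"
    using contraction_Ts[OF j] by (simp add: contraction_def)
  ultimately show "0 \<le> cinner (defect j x) x"
    by (simp add: less_eq_complex_def power_mono)
qed

definition pos_commutant :: "nat set \<Rightarrow> ('h \<Rightarrow> 'h) \<Rightarrow> bool" where
  "pos_commutant S P \<longleftrightarrow> bounded_op P \<and> selfadjoint_op P \<and> op_pos P \<and>
     (\<forall>i\<in>S. \<forall>x. P \<circ> Tpow i x = Tpow i x \<circ> P)"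

lemma pos_commutant_id: "pos_commutant S id"
  by (simp add: pos_commutant_def bounded_op_id selfadjoint_op_def op_pos_def cinner_self_nonneg)

lemma pos_commutant_mono: "pos_commutant S P \<Longrightarrow> S' \<subseteq> S \<Longrightarrow> pos_commutant S' P"
  by (auto simp: pos_commutant_def)

lemma pos_commutant_comp_defect:
  assumes P: "pos_commutant S P" and jS: "j \<in> S" and S: "S \<subseteq> {1..k}"
  shows "pos_commutant (S - {j}) (P \<circ> defect j)"
proof -
  have j: "j \<in> {1..k}" using jS S by auto
  have bP: "bounded_op P" and saP: "selfadjoint_op P" and pP: "op_pos P"
    and cP: "\<And>i x. i \<in> S \<Longrightarrow> P \<circ> Tpow i x = Tpow i x \<circ> P"
    using P by (auto simp: pos_commutant_def)
  have lP: "clinear_op P" using bP bounded_op_clinear by blast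
  have "P (Tpow j a v) = Tpow j a (P v)" for a v
    using fun_cong[OF cP[OF jS, of a], of v] by simp
  from this[of 1] this[of "-1"] have cPD: "P (defect j v) = defect j (P v)" for v
    by (simp add: defect_def Tsq_def clinear_op_diff[OF lP] op_ipow_1 op_ipow_minus1)
  have "bounded_op (P \<circ> defect j)" using bounded_op_comp[OF bP bounded_defect[OF j]] .
  moreover have "selfadjoint_op (P \<circ> defect j)"
    using saP selfadjoint_defect[OF j] unfolding selfadjoint_op_def by (simp add: cPD)
  moreover have "op_pos (P \<circ> defect j)"
    using op_pos_comp_commuting[OF bounded_op_clinear[OF bounded_defect[OF j]] selfadjoint_defect[OF j]
        bP saP pP op_pos_defect[OF j] op_pos_id_minus_defect[OF j] cPD] .
  moreover have "(P \<circ> defect j) \<circ> Tpow i x = Tpow i x \<circ> (P \<circ> defect j)" if "i \<in> S - {j}" for i x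
  proof -
    have i: "i \<in> {1..k}" "i \<noteq> j" using that S by auto
    have "(P \<circ> defect j) \<circ> Tpow i x = P \<circ> (Tpow i x \<circ> defect j)"
      by (simp add: comp_assoc Tpow_defect_commute[OF i(1) j i(2)])
    also have "\<dots> = Tpow i x \<circ> (P \<circ> defect j)"
      using cP[of i x] that by (simp add: comp_assoc[symmetric])
    finally show ?thesis .
  qed
  ultimately show ?thesis by (auto simp: pos_commutant_def)
qed

definition Tset :: "nat set \<Rightarrow> ('h \<Rightarrow> 'h)" where
  "Tset v = op_prod (\<lambda>l. Tpow l (if l \<in> v then 1 else 0)) [1..<k+1]"

lemma Tdc_gdc_e: "Tdc k q Ts (gdc_e v) = Tset v"
  by (simp add: Tdc_def gdc_e_def Tset_def)

lemma bounded_Tset: "bounded_op (Tset v)"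
  unfolding Tset_def by (rule bounded_op_prod) (use bounded_Tpow in auto)

lemma upt_split_at:
  assumes "1 \<le> i" "i \<le> k"
  shows "[1..<k+1] = [1..<i] @ i # [Suc i..<k+1]"
  using assms upt_add_eq_append[of 1 i "k + 1 - i"] upt_conv_Cons[of i "k + 1"] by simp

lemma Tset_insert:
  assumes i: "i \<in> {1..k}" and v: "\<And>l. l \<in> v \<Longrightarrow> i < l"
  shows "Tset (insert i v) = Ts i \<circ> Tset v"
proof -
  let ?f = "\<lambda>w l. Tpow l (if l \<in> w then 1 else 0)"
  have "1 \<le> i" "i \<le> k" using i by auto
  then have split: "Tset w = op_prod (?f w) [1..<i] \<circ> (?f w i \<circ> op_prod (?f w) [Suc i..<k+1])" for w
    by (simp only: Tset_def upt_split_at op_prod_append op_prod_Cons)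
  have "op_prod (?f w) [1..<i] = id" if "w = v \<or> w = insert i v" for w
    using v that by (intro op_prod_eq_id) (force simp: op_ipow_0)
  note init = this[OF disjI1[OF refl]] this[OF disjI2[OF refl]]
  have tail: "op_prod (?f (insert i v)) [Suc i..<k+1] = op_prod (?f v) [Suc i..<k+1]"
    by (rule op_prod_cong) auto
  have "i \<notin> v" using v by blast
  then have "?f (insert i v) i = Ts i" "?f v i = id"
    by (simp_all add: op_ipow_0 op_ipow_1)
  then show ?thesis
    by (simp only: split[of v] split[of "insert i v"] init tail id_comp)
qed

lemma Tsq_Tset_commute:
  assumes i: "i \<in> {1..k}" and "i \<notin> v"
  shows "Tsq i \<circ> Tset v = Tset v \<circ> Tsq i"
  unfolding Tset_def
proof (rule op_prod_commute)
  fix l assume "l \<in> set [1..<k+1]"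
  then show "Tsq i \<circ> Tpow l (if l \<in> v then 1 else 0) = Tpow l (if l \<in> v then 1 else 0) \<circ> Tsq i"
    using Tpow_Tsq_commute[of l i] i assms(2) by (cases "l = i") (auto simp: op_ipow_0)
qed

lemma Sop_eq: "Sop k q Ts u = (\<lambda>x. \<Sum>v\<in>Pow u. scaleC ((-1) ^ card v) ((adj (Tset v) \<circ> Tset v) x))"
  by (simp add: Sop_def Tdc_gdc_e)

lemma Tset_sq_insert:
  assumes i: "i \<in> {1..k}" and v: "\<And>l. l \<in> v \<Longrightarrow> i < l"
  shows "adj (Tset (insert i v)) \<circ> Tset (insert i v) = (adj (Tset v) \<circ> Tset v) \<circ> Tsq i"
proof -
  have "i \<notin> v" using v by blast
  moreover have "bounded_op (Ts i)" using bounded_Ts i by auto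
  ultimately show ?thesis
    by (simp add: Tset_insert[OF i v] adj_comp bounded_Tset Tsq_def comp_assoc
        Tsq_Tset_commute[OF i, symmetric, unfolded Tsq_def comp_assoc])
qed

text \<open>The terms of \<open>S(insert i u)\<close> with and without \<open>i\<close> pair up.\<close>
lemma Sop_insert:
  assumes i: "i \<in> {1..k}" and u: "\<And>l. l \<in> u \<Longrightarrow> i < l" and "finite u"
  shows "Sop k q Ts (insert i u) = Sop k q Ts u \<circ> defect i"
proof
  fix x
  let ?t = "\<lambda>v x. scaleC ((-1) ^ card v) ((adj (Tset v) \<circ> Tset v) x)"
  have iu: "i \<notin> u" using u by blast
  have "inj_on (insert i) (Pow u)"
    using iu by (intro inj_onI) (metis PowD insert_ident subsetD)
  then have "(\<Sum>v\<in>insert i ` Pow u. ?t v x) = (\<Sum>v\<in>Pow u. ?t (insert i v) x)"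
    by (rule sum.reindex_cong) auto
  also have "\<dots> = (\<Sum>v\<in>Pow u. - ?t v (Tsq i x))"
  proof (rule sum.cong[OF refl])
    fix v assume v: "v \<in> Pow u"
    then have "finite v" using \<open>finite u\<close> by (auto intro: finite_subset)
    moreover have "i \<notin> v" using iu v by blast
    ultimately have "card (insert i v) = Suc (card v)" by simp
    moreover have "\<And>l. l \<in> v \<Longrightarrow> i < l" using v u by auto
    ultimately show "?t (insert i v) x = - ?t v (Tsq i x)"
      using fun_cong[OF Tset_sq_insert[OF i], of v x] by (simp add: scaleC_minus_left)
  qed
  finally have "Sop k q Ts (insert i u) x = (\<Sum>v\<in>Pow u. ?t v x) + (\<Sum>v\<in>Pow u. - ?t v (Tsq i x))"
    unfolding Sop_eq Pow_insert using iu \<open>finite u\<close>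
    by (subst sum.union_disjoint) auto
  also have "\<dots> = (\<Sum>v\<in>Pow u. ?t v (x - Tsq i x))"
    using bounded_op_clinear[OF bounded_op_adj[OF bounded_Tset]] bounded_op_clinear[OF bounded_Tset]
    by (simp add: sum_negf[symmetric] sum.distrib[symmetric] clinear_op_diff scaleC_diff_right)
  finally show "Sop k q Ts (insert i u) x = (Sop k q Ts u \<circ> defect i) x"
    by (simp add: Sop_eq defect_def)
qed

lemma Sop_empty: "Sop k q Ts {} = id"
proof -
  have "Tset {} = id" unfolding Tset_def by (rule op_prod_eq_id) (simp add: op_ipow_0)
  then have "adj (Tset {}) \<circ> Tset {} = id" by (simp only: adj_id comp_id)
  then show ?thesis by (simp add: Sop_eq scaleC_one fun_eq_iff)
qed

lemma pos_commutant_Sop: "u \<subseteq> {1..k} \<Longrightarrow> pos_commutant ({1..k} - u) (Sop k q Ts u)"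
proof (induction "card u" arbitrary: u rule: less_induct)
  case less
  show ?case
  proof (cases "u = {}")
    case True then show ?thesis by (simp add: Sop_empty pos_commutant_id)
  next
    case False
    have fu: "finite u" using less.prems finite_subset by blast
    define i where "i = Min u"
    have iu: "i \<in> u" using Min_in[OF fu False] by (simp add: i_def)
    have lt: "\<And>l. l \<in> u - {i} \<Longrightarrow> i < l"
      using Min_le[OF fu] by (fastforce simp: i_def)
    have i: "i \<in> {1..k}" using iu less.prems by auto
    have "pos_commutant ({1..k} - (u - {i})) (Sop k q Ts (u - {i}))"
      using less.hyps[OF card_Diff1_less[OF fu iu]] less.prems by auto
    then have "pos_commutant ({1..k} - (u - {i}) - {i}) (Sop k q Ts (u - {i}) \<circ> defect i)"
      by (rule pos_commutant_comp_defect) (use i in auto)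
    moreover have "{1..k} - (u - {i}) - {i} = {1..k} - u" using iu by auto
    moreover have "Sop k q Ts (insert i (u - {i})) = Sop k q Ts (u - {i}) \<circ> defect i"
      by (rule Sop_insert[OF i]) (use lt fu in auto)
    ultimately show ?thesis by (simp add: insert_absorb[OF iu])
  qed
qed

theorem op_pos_Sop: "u \<subseteq> {1..k} \<Longrightarrow> op_pos (Sop k q Ts u)"
  using pos_commutant_Sop by (simp add: pos_commutant_def)

definition Tprod :: "nat \<Rightarrow> (nat \<Rightarrow> int) \<Rightarrow> ('h \<Rightarrow> 'h)" where
  "Tprod m g = op_prod (\<lambda>l. Tpow l (g l)) [1..<m+1]"

lemma Tprod_0: "Tprod 0 g = id"
  by (simp add: Tprod_def)

lemma Tprod_Suc: "Tprod (Suc m) g = Tprod m g \<circ> Tpow (Suc m) (g (Suc m))"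
  by (simp add: Tprod_def op_prod_append)

lemma bounded_Tprod: "m \<le> k \<Longrightarrow> bounded_op (Tprod m g)"
  unfolding Tprod_def by (rule bounded_op_prod) (use bounded_Tpow in auto)

lemma clinear_Tprod: "m \<le> k \<Longrightarrow> clinear_op (Tprod m g)"
  using bounded_Tprod bounded_op_clinear by blast

lemma Tdc_Tprod: "Tdc k q Ts s = op_scale (\<Prod>(i, j)\<in>pairs k. q i j powi fst s i j) (Tprod k (snd s))"
  by (simp add: Tdc_def Tprod_def)

lemma q_nonzero_le: "1 \<le> i \<Longrightarrow> i < j \<Longrightarrow> j \<le> k \<Longrightarrow> q i j \<noteq> 0"
  by (rule q_nonzero) (simp add: pairs_def)

lemma cmod_q_le: "1 \<le> i \<Longrightarrow> i < j \<Longrightarrow> j \<le> k \<Longrightarrow> cmod (q i j) = 1"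
  by (rule cmod_q) (simp add: pairs_def)

lemma Tprod_q_commute:
  assumes "m < j" "j \<le> k"
  shows "Tprod m d \<circ> Tpow j b = op_scale (\<Prod>i\<in>{1..m}. q i j powi (d i * b)) (Tpow j b \<circ> Tprod m d)"
  using assms
proof (induction m)
  case (Suc m)
  have p: "(Suc m, j) \<in> pairs k" using Suc.prems by (auto simp: pairs_def)
  have lR: "clinear_op (Tprod m d)" using Suc.prems by (intro clinear_Tprod) simp
  have "Tprod (Suc m) d \<circ> Tpow j b = Tprod m d \<circ> (Tpow (Suc m) (d (Suc m)) \<circ> Tpow j b)"
    by (simp add: Tprod_Suc comp_assoc)
  also have "\<dots> = op_scale (q (Suc m) j powi (d (Suc m) * b))
                     ((Tprod m d \<circ> Tpow j b) \<circ> Tpow (Suc m) (d (Suc m)))"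
    by (simp only: Tpow_q_commute[OF p] comp_op_scale_right[OF lR] comp_assoc)
  also have "\<dots> = op_scale (q (Suc m) j powi (d (Suc m) * b))
       (op_scale (\<Prod>i\<in>{1..m}. q i j powi (d i * b)) (Tpow j b \<circ> Tprod m d) \<circ> Tpow (Suc m) (d (Suc m)))"
    using Suc.prems by (simp only: Suc.IH)
  also have "\<dots> = op_scale (q (Suc m) j powi (d (Suc m) * b) * (\<Prod>i\<in>{1..m}. q i j powi (d i * b)))
                    (Tpow j b \<circ> Tprod (Suc m) d)"
    by (simp only: comp_op_scale_left op_scale_op_scale Tprod_Suc comp_assoc)
  also have "q (Suc m) j powi (d (Suc m) * b) * (\<Prod>i\<in>{1..m}. q i j powi (d i * b)) =
             (\<Prod>i\<in>{1..Suc m}. q i j powi (d i * b))"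
    by (simp add: prod.cl_ivl_Suc mult.commute)
  finally show ?case .
qed (simp add: Tprod_0)

lemma adj_Ts_Tprod_commute:
  assumes "m < j" "j \<le> k"
  shows "adj (Ts j) \<circ> Tprod m d = op_scale (\<Prod>i\<in>{1..m}. q i j powi d i) (Tprod m d \<circ> adj (Ts j))"
proof -
  have "(\<Prod>i\<in>{1..m}. q i j powi (d i * -1)) \<noteq> 0"
    using assms by (intro prod_powi_nonzero q_nonzero_le) auto
  from op_scale_inverse[OF Tprod_q_commute[OF assms, of d "-1"] this]
  show ?thesis by (simp add: inverse_prod_powi op_ipow_minus1)
qed

lemma adj_Tprod:
  assumes "m \<le> k"
  shows "adj (Tprod m g) = op_scale (\<Prod>(i, j)\<in>pairs m. q i j powi (- (g i * g j))) (Tprod m (\<lambda>l. - g l))"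
  using assms
proof (induction m)
  case 0
  have "pairs 0 = {}" by (auto simp: pairs_def)
  then show ?case by (simp only: Tprod_0 adj_id prod.empty op_scale_one)
next
  case (Suc m)
  have mk: "m < Suc m" "Suc m \<le> k" using Suc.prems by auto
  have b1: "bounded_op (Tprod m g)" using Suc.prems by (intro bounded_Tprod) simp
  have b2: "bounded_op (Tpow (Suc m) (g (Suc m)))" using Suc.prems by (intro bounded_Tpow) simp
  have l2: "clinear_op (Tpow (Suc m) (- g (Suc m)))" using Suc.prems by (intro clinear_Tpow) simp
  define cA where "cA = (\<Prod>(i, j)\<in>pairs m. q i j powi (- (g i * g j)))"
  define cB where "cB = (\<Prod>i\<in>{1..m}. q i (Suc m) powi ((- g i) * (- g (Suc m))))"
  have nzB: "cB \<noteq> 0" unfolding cB_def using mk by (intro prod_powi_nonzero q_nonzero_le) auto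
  have "adj (Tprod (Suc m) g) = Tpow (Suc m) (- g (Suc m)) \<circ> op_scale cA (Tprod m (\<lambda>l. - g l))"
    using Suc by (simp add: Tprod_Suc adj_comp[OF b1 b2] adj_ipow bounded_Ts cA_def)
  also have "\<dots> = op_scale cA (Tpow (Suc m) (- g (Suc m)) \<circ> Tprod m (\<lambda>l. - g l))"
    by (rule comp_op_scale_right[OF l2])
  also have "Tpow (Suc m) (- g (Suc m)) \<circ> Tprod m (\<lambda>l. - g l) = op_scale (inverse cB) (Tprod (Suc m) (\<lambda>l. - g l))"
    using op_scale_inverse[OF Tprod_q_commute[OF mk, of "\<lambda>l. - g l" "- g (Suc m)", folded cB_def] nzB]
    by (simp add: Tprod_Suc)
  also have "op_scale cA (op_scale (inverse cB) (Tprod (Suc m) (\<lambda>l. - g l))) =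
     op_scale (cA * inverse cB) (Tprod (Suc m) (\<lambda>l. - g l))" by (simp add: op_scale_op_scale)
  also have "cA * inverse cB = (\<Prod>(i, j)\<in>pairs (Suc m). q i j powi (- (g i * g j)))"
    by (simp add: cA_def cB_def inverse_prod_powi prod_pairs_Suc)
  finally show ?case .
qed

lemma Tdc_gdc_inv: "Tdc k q Ts (gdc_inv k s) = adj (Tdc k q Ts s)"
proof -
  obtain a g where s: "s = (a, g)" by (cases s)
  have nz: "\<And>i j. (i, j) \<in> pairs k \<Longrightarrow> q i j \<noteq> 0" using q_nonzero by blast
  have "adj (Tdc k q Ts s) = op_scale (cnj (\<Prod>(i, j)\<in>pairs k. q i j powi a i j) *
            (\<Prod>(i, j)\<in>pairs k. q i j powi (- (g i * g j)))) (Tprod k (\<lambda>l. - g l))"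
    by (simp add: Tdc_Tprod s adj_scale[OF bounded_Tprod] adj_Tprod op_scale_op_scale)
  also have "cnj (\<Prod>(i, j)\<in>pairs k. q i j powi a i j) * (\<Prod>(i, j)\<in>pairs k. q i j powi (- (g i * g j)))
     = (\<Prod>(i, j)\<in>pairs k. q i j powi (- a i j - (if (i, j) \<in> pairs k then g i * g j else 0)))"
    by (simp only: cnj_prod_pairs_powi[OF cmod_q] prod_pairs_powi_add[OF nz])
       (rule prod_pairs_powi_cong, simp)
  also have "op_scale \<dots> (Tprod k (\<lambda>l. - g l)) = Tdc k q Ts (gdc_inv k s)"
    unfolding s gdc_inv_def Tdc_Tprod fst_conv snd_conv by (rule refl)
  finally show ?thesis by (rule sym)
qed

definition phase :: "nat \<Rightarrow> (nat \<Rightarrow> int) \<Rightarrow> (nat \<Rightarrow> int) \<Rightarrow> complex" where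
  "phase m a b = (\<Prod>(i, j)\<in>pairs m. q i j powi ((a i - b i) * b j))"

text \<open>\<open>kernel m P a b\<close> is \<open>K\<^sub>m(P)\<close> evaluated at group elements with \<open>s\<close>-exponents \<open>a\<close> and \<open>b\<close>.\<close>
definition kernel :: "nat \<Rightarrow> ('h \<Rightarrow> 'h) \<Rightarrow> (nat \<Rightarrow> int) \<Rightarrow> (nat \<Rightarrow> int) \<Rightarrow> ('h \<Rightarrow> 'h)" where
  "kernel m P a b = op_scale (phase m a b) (Tprod m (\<lambda>l. a l - b l) \<circ> P)"

lemma pos_commutant_Tprod_commute:
  assumes "pos_commutant {1..m} P"
  shows "P \<circ> Tprod m d = Tprod m d \<circ> P"
  unfolding Tprod_def
  by (rule op_prod_commute) (use assms in \<open>auto simp: pos_commutant_def\<close>)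

lemma clinear_kernel: "m \<le> k \<Longrightarrow> bounded_op P \<Longrightarrow> clinear_op (kernel m P a b)"
  unfolding kernel_def by (intro bounded_op_clinear bounded_op_scale bounded_op_comp bounded_Tprod)

lemma kernel_0: "kernel 0 P a b = P"
proof -
  have "pairs 0 = {}" by (auto simp: pairs_def)
  then show ?thesis by (simp add: kernel_def phase_def Tprod_0)
qed

lemma kernel_defect: "kernel m P a b (defect j x) = kernel m (P \<circ> defect j) a b x"
  by (simp add: kernel_def op_scale_def)

lemma phase_Suc:
  "phase (Suc m) a b = phase m a b * (\<Prod>i\<in>{1..m}. q i (Suc m) powi ((a i - b i) * b (Suc m)))"
  unfolding phase_def by (simp add: prod_pairs_Suc)

lemma phase_cnj_adj_Tprod:
  assumes "m \<le> k"
  shows "phase m a b * cnj (\<Prod>(i, j)\<in>pairs m. q i j powi (- ((a i - b i) * (a j - b j)))) = cnj (phase m b a)"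
proof -
  have un: "\<And>i j. (i, j) \<in> pairs m \<Longrightarrow> cmod (q i j) = 1"
    using cmod_q pairs_mono[OF assms] by blast
  have nz: "\<And>i j. (i, j) \<in> pairs m \<Longrightarrow> q i j \<noteq> 0"
    using q_nonzero pairs_mono[OF assms] by blast
  have "phase m a b * cnj (\<Prod>(i, j)\<in>pairs m. q i j powi (- ((a i - b i) * (a j - b j))))
      = (\<Prod>(i, j)\<in>pairs m. q i j powi ((a i - b i) * b j + - (- ((a i - b i) * (a j - b j)))))"
    unfolding phase_def by (simp only: cnj_prod_pairs_powi[OF un] prod_pairs_powi_add[OF nz])
  also have "\<dots> = (\<Prod>(i, j)\<in>pairs m. q i j powi (- ((b i - a i) * a j)))"
    by (rule prod_pairs_powi_cong) (simp add: algebra_simps)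
  also have "\<dots> = cnj (phase m b a)"
    unfolding phase_def by (simp only: cnj_prod_pairs_powi[OF un])
  finally show ?thesis .
qed

lemma kernel_hermitian:
  assumes mk: "m \<le> k" and P: "pos_commutant {1..m} P"
  shows "cinner (kernel m P a b x) y = cinner x (kernel m P b a y)"
proof -
  define c where "c = (\<Prod>(i, j)\<in>pairs m. q i j powi (- ((a i - b i) * (a j - b j))))"
  have lP: "clinear_op P" and saP: "selfadjoint_op P"
    using P by (auto simp: pos_commutant_def bounded_op_clinear)
  have adjR: "adj (Tprod m (\<lambda>l. a l - b l)) = op_scale c (Tprod m (\<lambda>l. b l - a l))"
    using adj_Tprod[OF mk, of "\<lambda>l. a l - b l"] by (simp add: c_def)
  have PR: "P (Tprod m (\<lambda>l. b l - a l) y) = Tprod m (\<lambda>l. b l - a l) (P y)"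
    using fun_cong[OF pos_commutant_Tprod_commute[OF P]] by simp
  have "cinner (kernel m P a b x) y = phase m a b * cinner (Tprod m (\<lambda>l. a l - b l) (P x)) y"
    by (simp add: kernel_def op_scale_def cinner_scaleC_left)
  also have "\<dots> = phase m a b * cinner x (P (adj (Tprod m (\<lambda>l. a l - b l)) y))"
    using saP by (simp add: cinner_adj_right[OF bounded_Tprod[OF mk]] selfadjoint_op_def)
  also have "\<dots> = (phase m a b * cnj c) * cinner x (Tprod m (\<lambda>l. b l - a l) (P y))"
    by (simp add: adjR op_scale_def clinear_op_scaleC[OF lP] cinner_scaleC_right PR)
  also have "phase m a b * cnj c = cnj (phase m b a)"
    unfolding c_def by (rule phase_cnj_adj_Tprod[OF mk])
  also have "cnj (phase m b a) * cinner x (Tprod m (\<lambda>l. b l - a l) (P y)) = cinner x (kernel m P b a y)"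
    by (simp add: kernel_def op_scale_def cinner_scaleC_right)
  finally show ?thesis .
qed

definition twist :: "nat \<Rightarrow> (nat \<Rightarrow> int) \<Rightarrow> int \<Rightarrow> complex" where
  "twist m a c = (\<Prod>l\<in>{1..m}. q l (Suc m) powi (a l * c))"

lemma twist_add:
  assumes "Suc m \<le> k"
  shows "twist m a c * twist m a d = twist m a (c + d)"
proof -
  have nz: "\<And>l. l \<in> {1..m} \<Longrightarrow> q l (Suc m) \<noteq> 0" using assms by (intro q_nonzero_le) auto
  show ?thesis unfolding twist_def by (simp only: prod_powi_add[OF nz] distrib_left)
qed

lemma kernel_Ts_Ts:
  assumes mk: "Suc m \<le> k" and P: "pos_commutant {1..Suc m} P"
  shows "cinner (kernel m P a b (scaleC (twist m a (-1)) (Ts (Suc m) x)))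
                (scaleC (twist m b (-1)) (Ts (Suc m) y))
         = cinner (kernel m P a b (Tsq (Suc m) x)) y"
proof -
  define K where "K = kernel m P a b"
  define c where "c = (\<Prod>l\<in>{1..m}. q l (Suc m) powi (a l - b l))"
  have p: "Suc m \<in> {1..k}" using mk by simp
  have bP: "bounded_op P" using P by (simp add: pos_commutant_def)
  have lK: "clinear_op K" unfolding K_def using mk bP by (intro clinear_kernel) auto
  have laT: "clinear_op (adj (Ts (Suc m)))"
    using clinear_Tpow[OF p, of "-1"] by (simp add: op_ipow_minus1)
  have PT: "P \<circ> Tpow (Suc m) (-1) = Tpow (Suc m) (-1) \<circ> P" using P by (simp add: pos_commutant_def)
  have cPa: "P (adj (Ts (Suc m)) u) = adj (Ts (Suc m)) (P u)" for u
    using fun_cong[OF PT, of u] by (simp add: op_ipow_minus1)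
  have "adj (Ts (Suc m)) (K (Ts (Suc m) x))
      = scaleC (phase m a b) (adj (Ts (Suc m)) (Tprod m (\<lambda>l. a l - b l) (P (Ts (Suc m) x))))"
    by (simp add: K_def kernel_def op_scale_def clinear_op_scaleC[OF laT])
  also have "\<dots> = scaleC (phase m a b) (scaleC c (Tprod m (\<lambda>l. a l - b l) (P (Tsq (Suc m) x))))"
    using fun_cong[OF adj_Ts_Tprod_commute[of m "Suc m" "\<lambda>l. a l - b l"], of "P (Ts (Suc m) x)"] mk
    by (simp add: op_scale_def c_def cPa Tsq_def)
  finally have step: "adj (Ts (Suc m)) (K (Ts (Suc m) x)) = scaleC c (K (Tsq (Suc m) x))"
    by (simp add: K_def kernel_def op_scale_def scaleC_scaleC mult.commute)
  have scal: "twist m a (-1) * cnj (twist m b (-1)) * c = 1"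
  proof -
    have un: "\<And>l. l \<in> {1..m} \<Longrightarrow> cmod (q l (Suc m)) = 1" using mk by (intro cmod_q_le) auto
    have nz: "\<And>l. l \<in> {1..m} \<Longrightarrow> q l (Suc m) \<noteq> 0" using mk by (intro q_nonzero_le) auto
    have "twist m a (-1) * cnj (twist m b (-1)) * c
        = (\<Prod>l\<in>{1..m}. q l (Suc m) powi (a l * -1 + - (b l * -1) + (a l - b l)))"
      unfolding twist_def c_def by (simp only: cnj_prod_powi[OF un] prod_powi_add[OF nz])
    also have "\<dots> = 1" by (rule prod.neutral) simp
    finally show ?thesis .
  qed
  have "cinner (K (scaleC (twist m a (-1)) (Ts (Suc m) x))) (scaleC (twist m b (-1)) (Ts (Suc m) y))
      = twist m a (-1) * cnj (twist m b (-1)) * cinner (adj (Ts (Suc m)) (K (Ts (Suc m) x))) y"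
    using bounded_Ts[OF p]
    by (simp add: clinear_op_scaleC[OF lK] cinner_scaleC_left cinner_scaleC_right cinner_adj_left)
  also have "\<dots> = (twist m a (-1) * cnj (twist m b (-1)) * c) * cinner (K (Tsq (Suc m) x)) y"
    by (simp add: step cinner_scaleC_left)
  finally show ?thesis
    by (simp only: scal mult_1_left K_def)
qed

lemma kernel_Suc:
  assumes mk: "Suc m \<le> k" and P: "pos_commutant {1..Suc m} P" and ab: "a (Suc m) = b (Suc m) + int c"
  shows "cinner (kernel m P a b (scaleC (twist m a (- int c))
                   ((Ts (Suc m) ^^ c) (scaleC (twist m a (a (Suc m))) x))))
                (scaleC (twist m b (b (Suc m))) y)
         = cinner (kernel (Suc m) P a b x) y"
proof -
  define e where "e = (\<Prod>l\<in>{1..m}. q l (Suc m) powi ((a l - b l) * b (Suc m)))"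
  have p: "Suc m \<in> {1..k}" using mk by simp
  have bP: "bounded_op P" using P by (simp add: pos_commutant_def)
  have lK: "clinear_op (kernel m P a b)" using mk bP by (intro clinear_kernel) auto
  have lTc: "clinear_op (Ts (Suc m) ^^ c)"
    using clinear_Tpow[OF p, of "int c"] by (simp add: op_ipow_of_nat)
  have PT: "P \<circ> Tpow (Suc m) (int c) = Tpow (Suc m) (int c) \<circ> P" using P by (simp add: pos_commutant_def)
  have cP: "P ((Ts (Suc m) ^^ c) u) = (Ts (Suc m) ^^ c) (P u)" for u
    using fun_cong[OF PT, of u] by (simp add: op_ipow_of_nat)
  have "twist m a (- int c) * twist m a (a (Suc m)) * cnj (twist m b (b (Suc m))) = e"
  proof -
    have un: "\<And>l. l \<in> {1..m} \<Longrightarrow> cmod (q l (Suc m)) = 1" using mk by (intro cmod_q_le) auto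
    have nz: "\<And>l. l \<in> {1..m} \<Longrightarrow> q l (Suc m) \<noteq> 0" using mk by (intro q_nonzero_le) auto
    have "twist m a (- int c) * twist m a (a (Suc m)) * cnj (twist m b (b (Suc m)))
        = (\<Prod>l\<in>{1..m}. q l (Suc m) powi (a l * - int c + a l * a (Suc m) + - (b l * b (Suc m))))"
      unfolding twist_def
      by (simp only: cnj_prod_powi[OF un] prod_powi_add[OF nz])
    also have "\<dots> = e"
      unfolding e_def by (rule prod.cong) (simp_all add: ab algebra_simps)
    finally show ?thesis .
  qed
  moreover have "kernel (Suc m) P a b x = scaleC e (kernel m P a b ((Ts (Suc m) ^^ c) x))"
    using ab
    by (simp add: kernel_def phase_Suc Tprod_Suc op_scale_def op_ipow_of_nat cP e_def
        scaleC_scaleC mult.commute)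
  ultimately show ?thesis
    by (simp add: clinear_op_scaleC[OF lK] clinear_op_scaleC[OF lTc] cinner_scaleC_left
        cinner_scaleC_right ac_simps)
qed

definition kform ::
  "nat \<Rightarrow> ('h \<Rightarrow> 'h) \<Rightarrow> ('i \<Rightarrow> nat \<Rightarrow> int) \<Rightarrow> 'i set \<Rightarrow> ('i \<Rightarrow> 'h) \<Rightarrow> ('i \<Rightarrow> 'h) \<Rightarrow> complex" where
  "kform m P \<sigma> I v w = (\<Sum>i\<in>I. \<Sum>j\<in>I. cinner (kernel m P (\<sigma> i) (\<sigma> j) (v i)) (w j))"

definition shift :: "nat \<Rightarrow> ('i \<Rightarrow> nat \<Rightarrow> int) \<Rightarrow> ('i \<Rightarrow> 'h) \<Rightarrow> ('i \<Rightarrow> 'h)" where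
  "shift m \<sigma> v = (\<lambda>i. scaleC (twist m (\<sigma> i) (-1)) (Ts (Suc m) (v i)))"

lemma shift_add: "Suc m \<le> k \<Longrightarrow> shift m \<sigma> (v + w) = shift m \<sigma> v + shift m \<sigma> w"
  using clinear_Tpow[of "Suc m" 1]
  by (simp add: shift_def fun_eq_iff clinear_op_add scaleC_add_right op_ipow_1)

lemma shift_funpow:
  assumes "Suc m \<le> k"
  shows "(shift m \<sigma> ^^ c) v = (\<lambda>i. scaleC (twist m (\<sigma> i) (- int c)) ((Ts (Suc m) ^^ c) (v i)))"
proof (induction c)
  case 0
  show ?case by (simp add: twist_def scaleC_one)
next
  case (Suc c)
  have l: "clinear_op (Ts (Suc m))" using clinear_Tpow[of "Suc m" 1] assms by (simp add: op_ipow_1)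
  have "(shift m \<sigma> ^^ Suc c) v = shift m \<sigma> ((shift m \<sigma> ^^ c) v)" by simp
  also have "\<dots> = shift m \<sigma> (\<lambda>i. scaleC (twist m (\<sigma> i) (- int c)) ((Ts (Suc m) ^^ c) (v i)))"
    by (simp only: Suc)
  also have "\<dots> = (\<lambda>i. scaleC (twist m (\<sigma> i) (- int (Suc c))) ((Ts (Suc m) ^^ Suc c) (v i)))"
    by (simp add: shift_def clinear_op_scaleC[OF l] scaleC_scaleC twist_add[OF assms] add.commute)
  finally show ?case .
qed

lemma kform_add_left:
  "m \<le> k \<Longrightarrow> bounded_op P \<Longrightarrow> kform m P \<sigma> I (v + v') w = kform m P \<sigma> I v w + kform m P \<sigma> I v' w"
  by (simp add: kform_def clinear_op_add[OF clinear_kernel] cinner_add_left sum.distrib)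

lemma kform_add_right: "kform m P \<sigma> I v (w + w') = kform m P \<sigma> I v w + kform m P \<sigma> I v w'"
  by (simp add: kform_def cinner_add_right sum.distrib)

lemma kform_hermitian:
  assumes "m \<le> k" "pos_commutant {1..m} P"
  shows "kform m P \<sigma> I w v = cnj (kform m P \<sigma> I v w)"
proof -
  have "kform m P \<sigma> I w v = (\<Sum>i\<in>I. \<Sum>j\<in>I. cnj (cinner (kernel m P (\<sigma> j) (\<sigma> i) (v j)) (w i)))"
    unfolding kform_def
  proof (intro sum.cong refl)
    fix i j
    show "cinner (kernel m P (\<sigma> i) (\<sigma> j) (w i)) (v j) = cnj (cinner (kernel m P (\<sigma> j) (\<sigma> i) (v j)) (w i))"
      using kernel_hermitian[OF assms, of "\<sigma> i" "\<sigma> j" "w i" "v j"] cinner_commute[of "w i"] by simp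
  qed
  also have "\<dots> = cnj (kform m P \<sigma> I v w)"
    by (subst sum.swap) (simp add: kform_def cnj_sum)
  finally show ?thesis .
qed

lemma kform_shift:
  assumes mk: "Suc m \<le> k" and P: "pos_commutant {1..Suc m} P"
  shows "kform m P \<sigma> I v v - kform m P \<sigma> I (shift m \<sigma> v) (shift m \<sigma> v)
           = kform m (P \<circ> defect (Suc m)) \<sigma> I v v"
proof -
  have lK: "clinear_op (kernel m P a b)" for a b
    using mk P by (intro clinear_kernel) (auto simp: pos_commutant_def)
  have "kform m P \<sigma> I (shift m \<sigma> v) (shift m \<sigma> v)
      = (\<Sum>i\<in>I. \<Sum>j\<in>I. cinner (kernel m P (\<sigma> i) (\<sigma> j) (Tsq (Suc m) (v i))) (v j))"
    unfolding kform_def shift_def using kernel_Ts_Ts[OF mk P] by simp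
  moreover have "kform m (P \<circ> defect (Suc m)) \<sigma> I v v
      = (\<Sum>i\<in>I. \<Sum>j\<in>I. cinner (kernel m P (\<sigma> i) (\<sigma> j) (v i - Tsq (Suc m) (v i))) (v j))"
    unfolding kform_def kernel_defect[symmetric] unfolding defect_def ..
  ultimately show ?thesis
    by (simp add: kform_def clinear_op_diff[OF lK] cinner_diff_left sum_subtractf)
qed

text \<open>The vectors \<open>f n\<close> collect the entries \<open>h i\<close> with \<open>\<sigma> i (m + 1) = L + n\<close>, twisted so that
  the blocks of the \<open>(m + 1)\<close>-st kernel become the Toeplitz entries of the \<open>m\<close>-th one.\<close>
lemma kform_level_blocks:
  fixes \<sigma> :: "'i \<Rightarrow> nat \<Rightarrow> int" and h :: "'i \<Rightarrow> 'h" and \<nu> :: "'i \<Rightarrow> nat"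
  assumes mk: "Suc m \<le> k" and P: "pos_commutant {1..Suc m} P" and "n' \<le> n"
    and \<nu>: "\<And>i. i \<in> I \<Longrightarrow> \<sigma> i (Suc m) = L + int (\<nu> i)"
  defines "f \<equiv> \<lambda>n i. if \<nu> i = n then scaleC (twist m (\<sigma> i) (\<sigma> i (Suc m))) (h i) else 0"
  shows "kform m P \<sigma> I ((shift m \<sigma> ^^ (n - n')) (f n)) (f n')
           = (\<Sum>i\<in>I. \<Sum>j\<in>I. if \<nu> i = n \<and> \<nu> j = n'
                 then cinner (kernel (Suc m) P (\<sigma> i) (\<sigma> j) (h i)) (h j) else 0)"
  unfolding kform_def shift_funpow[OF mk]
proof (intro sum.cong refl)
  fix i j assume i: "i \<in> I" and j: "j \<in> I"
  have lK: "clinear_op (kernel m P a b)" for a b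
    using mk P by (intro clinear_kernel) (auto simp: pos_commutant_def)
  have lTc: "clinear_op (Ts (Suc m) ^^ c)" for c
    using clinear_Tpow[of "Suc m" "int c"] mk by (simp add: op_ipow_of_nat)
  show "cinner (kernel m P (\<sigma> i) (\<sigma> j) (scaleC (twist m (\<sigma> i) (- int (n - n')))
            ((Ts (Suc m) ^^ (n - n')) (f n i)))) (f n' j)
        = (if \<nu> i = n \<and> \<nu> j = n' then cinner (kernel (Suc m) P (\<sigma> i) (\<sigma> j) (h i)) (h j) else 0)"
  proof (cases "\<nu> i = n \<and> \<nu> j = n'")
    case True
    then have "\<sigma> i (Suc m) = \<sigma> j (Suc m) + int (n - n')"
      using \<nu>[OF i] \<nu>[OF j] \<open>n' \<le> n\<close> by simp
    from kernel_Suc[OF mk P, where a = "\<sigma> i" and b = "\<sigma> j", OF this] show ?thesis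
      using True by (simp add: f_def)
  qed (auto simp: f_def clinear_op_0[OF lTc] clinear_op_0[OF lK] clinear_op_scaleC[OF lK])
qed

lemma kform_Suc_nonneg:
  fixes \<sigma> :: "'i \<Rightarrow> nat \<Rightarrow> int"
  assumes mk: "Suc m \<le> k" and P: "pos_commutant {1..Suc m} P" and "finite I"
    and IH: "\<And>P' v. pos_commutant {1..m} P' \<Longrightarrow> 0 \<le> kform m P' \<sigma> I v v"
  shows "0 \<le> kform (Suc m) P \<sigma> I h h"
proof (cases "I = {}")
  case False
  define L where "L = (MIN i\<in>I. \<sigma> i (Suc m))"
  define \<nu> where "\<nu> i = nat (\<sigma> i (Suc m) - L)" for i
  define N where "N = nat ((MAX i\<in>I. \<sigma> i (Suc m)) - L)"
  define f where "f n i = (if \<nu> i = n then scaleC (twist m (\<sigma> i) (\<sigma> i (Suc m))) (h i) else 0)" for n i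
  define X where "X i j = cinner (kernel (Suc m) P (\<sigma> i) (\<sigma> j) (h i)) (h j)" for i j
  define M where "M n n' = (\<Sum>i\<in>I. \<Sum>j\<in>I. if \<nu> i = n \<and> \<nu> j = n' then X i j else 0)" for n n'
  have \<sigma>: "\<sigma> i (Suc m) = L + int (\<nu> i)" and \<nu>_le: "\<nu> i \<le> N" if "i \<in> I" for i
    using that \<open>finite I\<close> by (auto simp: L_def \<nu>_def N_def intro!: nat_mono)
  have X_hermitian: "cnj (X i j) = X j i" for i j
    using kernel_hermitian[OF mk P, of "\<sigma> j" "\<sigma> i" "h j" "h i"] cinner_commute[of "h j"]
    by (simp add: X_def)
  have P_m: "pos_commutant {1..m} P" using P by (rule pos_commutant_mono) auto
  have "pos_commutant ({1..Suc m} - {Suc m}) (P \<circ> defect (Suc m))"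
    using P mk by (intro pos_commutant_comp_defect) auto
  then have PD: "pos_commutant {1..m} (P \<circ> defect (Suc m))"
    by (simp add: atLeastAtMostSuc_conv)
  have "0 \<le> (\<Sum>n\<le>N. \<Sum>n'\<le>N. M n n')"
  proof (rule toeplitz_sum_nonneg[where B = "kform m P \<sigma> I" and T = "shift m \<sigma>" and f = f])
    show "kform m P \<sigma> I (x + y) z = kform m P \<sigma> I x z + kform m P \<sigma> I y z" for x y z
      using mk P by (intro kform_add_left) (auto simp: pos_commutant_def)
    show "kform m P \<sigma> I x (y + z) = kform m P \<sigma> I x y + kform m P \<sigma> I x z" for x y z
      by (rule kform_add_right)
    show "kform m P \<sigma> I y x = cnj (kform m P \<sigma> I x y)" for x y
      using mk P_m by (intro kform_hermitian) auto
    show "shift m \<sigma> (x + y) = shift m \<sigma> x + shift m \<sigma> y" for x y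
      using mk by (rule shift_add)
    show "0 \<le> kform m P \<sigma> I x x - kform m P \<sigma> I (shift m \<sigma> x) (shift m \<sigma> x)" for x
      by (simp only: kform_shift[OF mk P] IH[OF PD])
    show "M n n' = kform m P \<sigma> I ((shift m \<sigma> ^^ (n - n')) (f n)) (f n')" if "n' \<le> n" for n n'
      unfolding M_def X_def f_def
      using kform_level_blocks[OF mk P that, where \<sigma> = \<sigma> and \<nu> = \<nu> and I = I and h = h, OF \<sigma>]
      by (rule sym)
    show "M n' n = cnj (M n n')" for n n'
      unfolding M_def by (rule level_blocks_hermitian) (rule X_hermitian)
    show "0 \<le> kform m P \<sigma> I x x" for x
      using IH[OF P_m] .
  qed
  also have "(\<Sum>n\<le>N. \<Sum>n'\<le>N. M n n') = kform (Suc m) P \<sigma> I h h"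
    unfolding M_def kform_def X_def by (rule sum_level_sets[OF \<nu>_le])
  finally show ?thesis .
qed (simp add: kform_def)

lemma kform_nonneg:
  assumes "m \<le> k" "finite I" "pos_commutant {1..m} P"
  shows "0 \<le> kform m P \<sigma> I h h"
  using assms
proof (induction m arbitrary: P h)
  case 0
  then have "clinear_op P" "op_pos P" by (auto simp: pos_commutant_def bounded_op_clinear)
  then have "cinner (P (\<Sum>i\<in>I. h i)) (\<Sum>j\<in>I. h j) = kform 0 P \<sigma> I h h"
    unfolding kform_def kernel_0 by (simp only: clinear_op_sum cinner_sum_left) (simp only: cinner_sum_right)
  then show ?case
    using \<open>op_pos P\<close> by (metis op_pos_def)
next
  case (Suc m)
  then show ?case by (intro kform_Suc_nonneg) auto
qed

lemma Tdc_kernel: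
  "cinner (Tdc k q Ts (gdc_mult k (gdc_inv k t) s) x) y =
     cinner (kernel k id (snd s) (snd t) (scaleC (\<Prod>(i, j)\<in>pairs k. q i j powi fst s i j) x))
            (scaleC (\<Prod>(i, j)\<in>pairs k. q i j powi fst t i j) y)"
proof -
  obtain a g where s: "s = (a, g)" by (cases s)
  obtain b h where t: "t = (b, h)" by (cases t)
  have nz: "\<And>i j. (i, j) \<in> pairs k \<Longrightarrow> q i j \<noteq> 0" using q_nonzero by blast
  have "(\<Prod>(i, j)\<in>pairs k. q i j powi fst (gdc_mult k (gdc_inv k t) s) i j)
      = (\<Prod>(i, j)\<in>pairs k. q i j powi (a i j + - b i j + (g i - h i) * h j))"
    unfolding s t gdc_mult_def gdc_inv_def fst_conv snd_conv
    by (rule prod_pairs_powi_cong) (simp add: algebra_simps)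
  also have "\<dots> = (\<Prod>(i, j)\<in>pairs k. q i j powi a i j) * cnj (\<Prod>(i, j)\<in>pairs k. q i j powi b i j)
                   * phase k g h"
    unfolding phase_def by (simp only: cnj_prod_pairs_powi[OF cmod_q] prod_pairs_powi_add[OF nz])
  finally have "cinner (Tdc k q Ts (gdc_mult k (gdc_inv k t) s) x) y
      = (\<Prod>(i, j)\<in>pairs k. q i j powi a i j) * cnj (\<Prod>(i, j)\<in>pairs k. q i j powi b i j)
          * phase k g h * cinner (Tprod k (\<lambda>l. g l - h l) x) y"
    by (simp add: Tdc_Tprod s t gdc_mult_def gdc_inv_def op_scale_def cinner_scaleC_left)
  then show ?thesis
    by (simp add: s t kernel_def op_scale_def clinear_op_scaleC[OF clinear_Tprod] cinner_scaleC_left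
        cinner_scaleC_right)
qed

theorem positive_definite_Tdc: "positive_definite (gdc_carrier k) (gdc_mult k) (gdc_inv k) (Tdc k q Ts)"
  unfolding positive_definite_def
proof (intro conjI ballI allI impI)
  show "Tdc k q Ts (gdc_inv k s) = adj (Tdc k q Ts s)" for s
    by (rule Tdc_gdc_inv)
next
  fix F :: "gdc set" and h :: "gdc \<Rightarrow> 'h"
  assume "finite F"
  define h' where "h' s = scaleC (\<Prod>(i, j)\<in>pairs k. q i j powi fst s i j) (h s)" for s
  have "0 \<le> kform k id snd F h' h'"
    using \<open>finite F\<close> by (intro kform_nonneg pos_commutant_id) auto
  then show "0 \<le> (\<Sum>s\<in>F. \<Sum>t\<in>F. cinner (Tdc k q Ts (gdc_mult k (gdc_inv k t) s) (h s)) (h t))"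
    by (simp add: kform_def Tdc_kernel h'_def)
qed

end

theorem theorem3p2:
  fixes k :: nat
    and Ts :: "nat \<Rightarrow> ('h::chilbert_space \<Rightarrow> 'h)"
    and q :: "nat \<Rightarrow> nat \<Rightarrow> complex"
  assumes contr: "\<And>i. i \<in> {1..k} \<Longrightarrow> contraction (Ts i)"
    and circle: "\<And>i j. (i, j) \<in> pairs k \<Longrightarrow> cmod (q i j) = 1"
    and comm: "\<And>i j. (i, j) \<in> pairs k \<Longrightarrow> Ts i \<circ> Ts j = op_scale (q i j) (Ts j \<circ> Ts i)"
    and dcomm: "\<And>i j. (i, j) \<in> pairs k \<Longrightarrow>
                  Ts i \<circ> adj (Ts j) = op_scale (cnj (q i j)) (adj (Ts j) \<circ> Ts i)"
  shows "positive_definite (gdc_carrier k) (gdc_mult k) (gdc_inv k) (Tdc k q Ts) \<longleftrightarrow>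
         (\<forall>u. u \<subseteq> {1..k} \<longrightarrow> op_pos (Sop k q Ts u))"
proof -
  interpret doubly_q_commuting k Ts q
    using contr circle comm dcomm by unfold_locales auto
  show ?thesis
    using positive_definite_Tdc op_pos_Sop by blast
qed

end
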